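(* Let $(\mathcal R,\tau)$ be a t-minimal Hausdorff geometric structure and $\mathcal S$ a lore of $(\mathcal R,\tau)$. Let $X$ be definable over $A$ and let $x\in X$ be generic over $A$. Then $x\in X^{lman}$.
   Context: A structure $\mathcal R$ is geometric if $\operatorname{acl}$ satisfies exchange and $\mathcal R$ eliminates $\exists^\infty$; $\dim$ denotes acl-dimension, and $a\in X$ is generic over $A$ if $\dim(a/A)=\dim(X)$. "Definable" allows parameters. Given a topology $\tau$ on $R$ (extended to definable subsets of $R^n$ by product and subspace topologies), $(\mathcal R,\tau)$ is a Hausdorff geometric structure if: (1) $\tau$ is Hausdorff; (2) $\mathcal R$ is geometric and $\aleph_1$-saturated; (3) if $X\subset R^n$ is $A$-definable and $a\in\overline{\overline X-X}$ then $\dim(a/A)<\dim(X)$; (4) if $X$ is definable over a countable $A$, $a\in X$ generic over $A$, and $B\supseteq A$ countable, every neighborhood of $a$ contains a generic of $X$ over $B$; (5) if $X,Y$, $Z\subset X\times Y$ are $A$-definable of the same dimension with both projections of $Z$ finite-to-one and $(x,y)\in Z$ generic over $A$, then $Z$ restricted to some $U\times V$ ($U\ni x$, $V\ni y$ open) is the graph of a homeomorphism $U\to V$. It is t-minimal if moreover $\tau$ has a basis given by the instances of a parameter-free formula, and $R$ has no isolated points. A lore is a collection $\mathcal S$ of definable sets ("loric sets") such that: (i) $R$ and the diagonal of $R^2$ are loric, and loric sets are closed under finite products, finite intersections, coordinate permutations; (ii) if $f:X\to Y$ is a definable homeomorphism with $X$ and the graph of $f$ loric, then $Y$ is loric; (iii)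 definable open subsets of loric sets are loric, and a definable set with an open cover by loric sets is loric; (iv) every nonempty $A$-definable $X$ has a relatively open $A$-definable loric subset $X'$ with $\dim(X-X')<\dim(X)$. A loric map is a continuous function with loric graph; a loric homeomorphism is a loric map that is a homeomorphism. For a definable $X$ with $\dim(X)=n$, a point $x\in X$ is a loric manifold point if there is a definable relatively open $U$ with $x\in U\subset X$ that is lorically homeomorphic to an open subset of $R^n$; $X^{lman}$ is the set of loric manifold points of $X$. *)

theory Defs
  imports "HOL-Analysis.Analysis"
begin

section \<open>First-order structures (relational signature, universe = UNIV of 'a)\<close>

text \<open>Formulas with named variables; the structure interprets each relation
symbol r as a predicate on lists of elements (its arity is implicit).\<close>

datatype 'r fm = Eq nat nat | Rel 'r "nat list" | Neg "'r fm" | Conj "'r fm" "'r fm" | Ex nat "'r fm"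

fun fv :: "'r fm \<Rightarrow> nat set" where
  "fv (Eq i j) = {i, j}"
| "fv (Rel r vs) = set vs"
| "fv (Neg \<phi>) = fv \<phi>"
| "fv (Conj \<phi> \<psi>) = fv \<phi> \<union> fv \<psi>"
| "fv (Ex x \<phi>) = fv \<phi> - {x}"

fun sat :: "('r \<Rightarrow> 'a list \<Rightarrow> bool) \<Rightarrow> (nat \<Rightarrow> 'a) \<Rightarrow> 'r fm \<Rightarrow> bool" where
  "sat I v (Eq i j) = (v i = v j)"
| "sat I v (Rel r vs) = I r (map v vs)"
| "sat I v (Neg \<phi>) = (\<not> sat I v \<phi>)"
| "sat I v (Conj \<phi> \<psi>) = (sat I v \<phi> \<and> sat I v \<psi>)"
| "sat I v (Ex x \<phi>) = (\<exists>a. sat I (v(x := a)) \<phi>)"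

section \<open>Tuples: R^n is represented by extensional functions on {..<n}\<close>

definition Rn :: "nat \<Rightarrow> (nat \<Rightarrow> 'a) set" where
  "Rn n = PiE {..<n} (\<lambda>_. UNIV)"

definition join :: "nat \<Rightarrow> nat \<Rightarrow> (nat \<Rightarrow> 'a) \<Rightarrow> (nat \<Rightarrow> 'a) \<Rightarrow> (nat \<Rightarrow> 'a)" where
  "join n m x y = (\<lambda>i. if i < n then x i else if i < n + m then y (i - n) else undefined)"

definition tprod :: "nat \<Rightarrow> nat \<Rightarrow> (nat \<Rightarrow> 'a) set \<Rightarrow> (nat \<Rightarrow> 'a) set \<Rightarrow> (nat \<Rightarrow> 'a) set" where
  "tprod n m X Y = {join n m x y | x y. x \<in> X \<and> y \<in> Y}"

definition graph :: "nat \<Rightarrow> nat \<Rightarrow> (nat \<Rightarrow> 'a) set \<Rightarrow> ((nat \<Rightarrow> 'a) \<Rightarrow> (nat \<Rightarrow> 'a)) \<Rightarrow> (nat \<Rightarrow> 'a) set" where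
  "graph n m U f = {join n m u (f u) | u. u \<in> U}"

definition Tn :: "'a topology \<Rightarrow> nat \<Rightarrow> (nat \<Rightarrow> 'a) topology" where
  "Tn \<tau> n = product_topology (\<lambda>_. \<tau>) {..<n}"

definition definable_over :: "('r \<Rightarrow> 'a list \<Rightarrow> bool) \<Rightarrow> nat \<Rightarrow> 'a set \<Rightarrow> (nat \<Rightarrow> 'a) set \<Rightarrow> bool" where
  "definable_over I n A X \<longleftrightarrow> X \<subseteq> Rn n \<and>
     (\<exists>\<phi> p. (\<forall>i \<in> fv \<phi>. n \<le> i \<longrightarrow> p i \<in> A) \<and>
            X = {x \<in> Rn n. sat I (\<lambda>i. if i < n then x i else p i) \<phi>})"

definition definable :: "('r \<Rightarrow> 'a list \<Rightarrow> bool) \<Rightarrow> nat \<Rightarrow> (nat \<Rightarrow> 'a) set \<Rightarrow> bool" where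
  "definable I n X \<longleftrightarrow> definable_over I n UNIV X"

definition acl :: "('r \<Rightarrow> 'a list \<Rightarrow> bool) \<Rightarrow> 'a set \<Rightarrow> 'a set" where
  "acl I A = {b. \<exists>\<phi> p. (\<forall>i \<in> fv \<phi>. i \<noteq> 0 \<longrightarrow> p i \<in> A) \<and>
       finite {c. sat I (p(0 := c)) \<phi>} \<and> sat I (p(0 := b)) \<phi>}"

definition dim_over :: "('r \<Rightarrow> 'a list \<Rightarrow> bool) \<Rightarrow> nat \<Rightarrow> (nat \<Rightarrow> 'a) \<Rightarrow> 'a set \<Rightarrow> nat" where
  "dim_over I n a A = (LEAST k. \<exists>S \<subseteq> {..<n}. card S = k \<and> (\<forall>i < n. a i \<in> acl I (A \<union> a ` S)))"

text \<open>dim(X) = max of dim(a/A), a in X, A a small (countable) parameter set over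
which X is defined (independent of A in an aleph_1-saturated geometric
structure); dim of the empty set is -1 (standing for -infinity).\<close>
definition dim :: "('r \<Rightarrow> 'a list \<Rightarrow> bool) \<Rightarrow> nat \<Rightarrow> (nat \<Rightarrow> 'a) set \<Rightarrow> int" where
  "dim I n X = (if X = {} then -1 else
     Max {int (dim_over I n a A) | a A. countable A \<and> definable_over I n A X \<and> a \<in> X})"

definition generic :: "('r \<Rightarrow> 'a list \<Rightarrow> bool) \<Rightarrow> nat \<Rightarrow> (nat \<Rightarrow> 'a) set \<Rightarrow> (nat \<Rightarrow> 'a) \<Rightarrow> 'a set \<Rightarrow> bool" where
  "generic I n X a A \<longleftrightarrow> a \<in> X \<and> int (dim_over I n a A) = dim I n X"

definition acl_exchange :: "('r \<Rightarrow> 'a list \<Rightarrow> bool) \<Rightarrow> bool" where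
  "acl_exchange I \<longleftrightarrow> (\<forall>A a b. b \<in> acl I (A \<union> {a}) - acl I A \<longrightarrow> a \<in> acl I (A \<union> {b}))"

text \<open>Elimination of the quantifier "there exist infinitely many" (uniform finiteness).\<close>
definition elim_exists_infinity :: "('r \<Rightarrow> 'a list \<Rightarrow> bool) \<Rightarrow> bool" where
  "elim_exists_infinity I \<longleftrightarrow> (\<forall>\<phi>. \<exists>N::nat. \<forall>p.
      finite {c. sat I (p(0 := c)) \<phi>} \<longrightarrow> card {c. sat I (p(0 := c)) \<phi>} \<le> N)"

definition geometric :: "('r \<Rightarrow> 'a list \<Rightarrow> bool) \<Rightarrow> bool" where
  "geometric I \<longleftrightarrow> acl_exchange I \<and> elim_exists_infinity I"

definition aleph1_saturated :: "('r \<Rightarrow> 'a list \<Rightarrow> bool) \<Rightarrow> bool" where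
  "aleph1_saturated I \<longleftrightarrow> (\<forall>(A::'a set) (\<Phi> :: ('r fm \<times> (nat \<Rightarrow> 'a)) set).
     countable A \<and> (\<forall>(\<phi>, p) \<in> \<Phi>. \<forall>i \<in> fv \<phi>. i \<noteq> 0 \<longrightarrow> p i \<in> A) \<and>
     (\<forall>F \<subseteq> \<Phi>. finite F \<longrightarrow> (\<exists>c. \<forall>(\<phi>, p) \<in> F. sat I (p(0 := c)) \<phi>)) \<longrightarrow>
     (\<exists>c. \<forall>(\<phi>, p) \<in> \<Phi>. sat I (p(0 := c)) \<phi>))"

definition hausdorff_geometric :: "('r \<Rightarrow> 'a list \<Rightarrow> bool) \<Rightarrow> 'a topology \<Rightarrow> bool" where
  "hausdorff_geometric I \<tau> \<longleftrightarrow>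
    topspace \<tau> = UNIV \<and>
    \<comment> \<open>(1)\<close> Hausdorff_space \<tau> \<and>
    \<comment> \<open>(2)\<close> geometric I \<and> aleph1_saturated I \<and>
    \<comment> \<open>(3)\<close> (\<forall>n A X a. definable_over I n A X \<and>
          a \<in> (Tn \<tau> n) closure_of ((Tn \<tau> n) closure_of X - X) \<longrightarrow>
          int (dim_over I n a A) < dim I n X) \<and>
    \<comment> \<open>(4)\<close> (\<forall>n A X a B U. countable A \<and> definable_over I n A X \<and> generic I n X a A \<and>
          countable B \<and> A \<subseteq> B \<and> openin (Tn \<tau> n) U \<and> a \<in> U \<longrightarrow>
          (\<exists>b \<in> U. generic I n X b B)) \<and>
    \<comment> \<open>(5)\<close> (\<forall>n m A X Y Z x y.
          definable_over I n A X \<and> definable_over I m A Y \<and> definable_over I (n + m) A Z \<and>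
          Z \<subseteq> tprod n m X Y \<and> dim I n X = dim I m Y \<and> dim I (n + m) Z = dim I n X \<and>
          (\<forall>u. finite {v \<in> Rn m. join n m u v \<in> Z}) \<and>
          (\<forall>v. finite {u \<in> Rn n. join n m u v \<in> Z}) \<and>
          x \<in> Rn n \<and> y \<in> Rn m \<and> generic I (n + m) Z (join n m x y) A \<longrightarrow>
          (\<exists>U V f. openin (subtopology (Tn \<tau> n) X) U \<and> x \<in> U \<and>
                   openin (subtopology (Tn \<tau> m) Y) V \<and> y \<in> V \<and>
                   homeomorphic_map (subtopology (Tn \<tau> n) U) (subtopology (Tn \<tau> m) V) f \<and>
                   Z \<inter> tprod n m U V = graph n m U f))"

definition t_minimal :: "('r \<Rightarrow> 'a list \<Rightarrow> bool) \<Rightarrow> 'a topology \<Rightarrow> bool" where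
  "t_minimal I \<tau> \<longleftrightarrow> hausdorff_geometric I \<tau> \<and>
    (\<exists>\<phi>. (\<forall>p. openin \<tau> {c. sat I (p(0 := c)) \<phi>}) \<and>
         (\<forall>U a. openin \<tau> U \<and> a \<in> U \<longrightarrow>
            (\<exists>p. a \<in> {c. sat I (p(0 := c)) \<phi>} \<and> {c. sat I (p(0 := c)) \<phi>} \<subseteq> U))) \<and>
    (\<forall>a. \<not> openin \<tau> {a})"

text \<open>A lore is given as a predicate L n X ("X \<subseteq> R^n is loric").\<close>
definition lore :: "('r \<Rightarrow> 'a list \<Rightarrow> bool) \<Rightarrow> 'a topology \<Rightarrow> (nat \<Rightarrow> (nat \<Rightarrow> 'a) set \<Rightarrow> bool) \<Rightarrow> bool" where
  "lore I \<tau> L \<longleftrightarrow>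
    (\<forall>n X. L n X \<longrightarrow> definable I n X) \<and>
    \<comment> \<open>(i)\<close> L 1 (Rn 1) \<and> L 2 {x \<in> Rn 2. x 0 = x 1} \<and>
    (\<forall>n m X Y. L n X \<and> L m Y \<longrightarrow> L (n + m) (tprod n m X Y)) \<and>
    (\<forall>n X Y. L n X \<and> L n Y \<longrightarrow> L n (X \<inter> Y)) \<and>
    (\<forall>n X \<sigma>. L n X \<and> \<sigma> permutes {..<n} \<longrightarrow> L n ((\<lambda>x. x \<circ> \<sigma>) ` X)) \<and>
    \<comment> \<open>(ii)\<close> (\<forall>n m X Y f. L n X \<and> Y \<subseteq> Rn m \<and> L (n + m) (graph n m X f) \<and>
          homeomorphic_map (subtopology (Tn \<tau> n) X) (subtopology (Tn \<tau> m) Y) f \<longrightarrow> L m Y) \<and>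
    \<comment> \<open>(iii)\<close> (\<forall>n X U. L n X \<and> definable I n U \<and> openin (subtopology (Tn \<tau> n) X) U \<longrightarrow> L n U) \<and>
    (\<forall>n X. definable I n X \<and>
          (\<forall>x \<in> X. \<exists>U. openin (subtopology (Tn \<tau> n) X) U \<and> x \<in> U \<and> L n U) \<longrightarrow> L n X) \<and>
    \<comment> \<open>(iv)\<close> (\<forall>n A X. definable_over I n A X \<and> X \<noteq> {} \<longrightarrow>
          (\<exists>X'. openin (subtopology (Tn \<tau> n) X) X' \<and> definable_over I n A X' \<and> L n X' \<and>
                dim I n (X - X') < dim I n X))"

definition loric_map :: "'a topology \<Rightarrow> (nat \<Rightarrow> (nat \<Rightarrow> 'a) set \<Rightarrow> bool) \<Rightarrow> nat \<Rightarrow> nat \<Rightarrow>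
     (nat \<Rightarrow> 'a) set \<Rightarrow> (nat \<Rightarrow> 'a) set \<Rightarrow> ((nat \<Rightarrow> 'a) \<Rightarrow> (nat \<Rightarrow> 'a)) \<Rightarrow> bool" where
  "loric_map \<tau> L n m U V f \<longleftrightarrow>
     continuous_map (subtopology (Tn \<tau> n) U) (subtopology (Tn \<tau> m) V) f \<and> L (n + m) (graph n m U f)"

definition loric_homeomorphism :: "'a topology \<Rightarrow> (nat \<Rightarrow> (nat \<Rightarrow> 'a) set \<Rightarrow> bool) \<Rightarrow> nat \<Rightarrow> nat \<Rightarrow>
     (nat \<Rightarrow> 'a) set \<Rightarrow> (nat \<Rightarrow> 'a) set \<Rightarrow> ((nat \<Rightarrow> 'a) \<Rightarrow> (nat \<Rightarrow> 'a)) \<Rightarrow> bool" where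
  "loric_homeomorphism \<tau> L n m U V f \<longleftrightarrow>
     loric_map \<tau> L n m U V f \<and>
     homeomorphic_map (subtopology (Tn \<tau> n) U) (subtopology (Tn \<tau> m) V) f"

definition lman :: "('r \<Rightarrow> 'a list \<Rightarrow> bool) \<Rightarrow> 'a topology \<Rightarrow> (nat \<Rightarrow> (nat \<Rightarrow> 'a) set \<Rightarrow> bool) \<Rightarrow>
     nat \<Rightarrow> (nat \<Rightarrow> 'a) set \<Rightarrow> (nat \<Rightarrow> 'a) set" where
  "lman I \<tau> L n X = {x \<in> X. \<exists>U. definable I n U \<and> openin (subtopology (Tn \<tau> n) X) U \<and> x \<in> U \<and>
      (\<exists>V f. openin (Tn \<tau> (nat (dim I n X))) V \<and>
             loric_homeomorphism \<tau> L n (nat (dim I n X)) U V f)}"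

end

theory Submission
  imports Defs
begin

text \<open>Let \<open>k = dim(x/A)\<close> and choose coordinates \<open>s 0, \<dots>, s (k - 1)\<close> of \<open>x\<close> over which, together
  with \<open>A\<close>, every coordinate \<open>x i\<close> is algebraic. Each \<open>x i\<close> then satisfies an \<open>A\<close>-definable relation
  \<open>E i\<close> with the chosen coordinates that has finitely many solutions for every value of them. These
  relations cut out of the graph of the coordinate projection \<open>p\<close> an \<open>A\<close>-definable set
  \<open>Z \<subseteq> X \<times> R\<^sup>k\<close> with finite fibres in both directions; hence \<open>dim Z = k = dim X = dim R\<^sup>k\<close> and
  \<open>(x, p x)\<close> is generic in \<open>Z\<close>, so axiom (5) makes \<open>p\<close> a homeomorphism from a neighbourhood of
  \<open>x\<close> in \<open>X\<close> onto an open subset of \<open>R\<^sup>k\<close>. By lore axiom (iv) the generic point \<open>x\<close> lies in a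
  relatively open loric \<open>X' \<subseteq> X\<close>. Shrinking the neighbourhood to \<open>X \<inter> B\<close> for a definable open box
  \<open>B\<close> gives a definable loric neighbourhood on which \<open>p\<close> is a loric homeomorphism: the graph of
  \<open>p\<close> over a loric set \<open>U\<close> is the loric set \<open>(U \<times> R\<^sup>k) \<inter> \<Inter>\<^sub>t {z. z (s t) = z (n + t)}\<close>.\<close>

section \<open>Definable predicates\<close>

fun rename_fm :: "(nat \<Rightarrow> nat) \<Rightarrow> 'r fm \<Rightarrow> 'r fm" where
  "rename_fm g (Eq i j) = Eq (g i) (g j)"
| "rename_fm g (Rel r vs) = Rel r (map g vs)"
| "rename_fm g (Neg \<phi>) = Neg (rename_fm g \<phi>)"
| "rename_fm g (Conj \<phi> \<psi>) = Conj (rename_fm g \<phi>) (rename_fm g \<psi>)"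
| "rename_fm g (Ex x \<phi>) = Ex (g x) (rename_fm g \<phi>)"

lemma sat_rename_fm: "inj g \<Longrightarrow> sat I v (rename_fm g \<phi>) = sat I (v \<circ> g) \<phi>"
proof (induction \<phi> arbitrary: v)
  case (Ex x \<phi>)
  have e: "\<And>a. (v(g x := a)) \<circ> g = (v \<circ> g)(x := a)"
    using Ex.prems by (auto simp: fun_eq_iff inj_eq)
  have "sat I v (rename_fm g (Ex x \<phi>)) = (\<exists>a. sat I (v(g x := a)) (rename_fm g \<phi>))" by simp
  also have "\<dots> = (\<exists>a. sat I ((v(g x := a)) \<circ> g) \<phi>)"
  proof -
    have "\<And>a. sat I (v(g x := a)) (rename_fm g \<phi>) = sat I ((v(g x := a)) \<circ> g) \<phi>"
      by (rule Ex.IH[OF Ex.prems])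
    then show ?thesis by simp
  qed
  also have "\<dots> = (\<exists>a. sat I ((v \<circ> g)(x := a)) \<phi>)" by (simp only: e)
  also have "\<dots> = sat I (v \<circ> g) (Ex x \<phi>)" by (simp only: sat.simps)
  finally show ?case .
qed simp_all

lemma fv_rename_fm: "inj g \<Longrightarrow> fv (rename_fm g \<phi>) = g ` fv \<phi>"
  by (induction \<phi>) (simp_all add: image_Un image_set_diff)

lemma finite_fv: "finite (fv \<phi>)"
  by (induction \<phi>) simp_all

lemma sat_cong: "(\<And>i. i \<in> fv \<phi> \<Longrightarrow> v i = w i) \<Longrightarrow> sat I v \<phi> = sat I w \<phi>"
proof (induction \<phi> arbitrary: v w)
  case (Rel r vs)
  have "map v vs = map w vs" unfolding map_eq_conv using Rel.prems by simp
  then show ?case by (simp only: sat.simps)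
next
  case (Ex x \<phi>)
  have "sat I (v(x := a)) \<phi> = sat I (w(x := a)) \<phi>" for a
  proof (rule Ex.IH)
    fix i assume "i \<in> fv \<phi>"
    then show "(v(x := a)) i = (w(x := a)) i" using Ex.prems[of i] by (cases "i = x") simp_all
  qed
  then show ?case by simp
next
  case (Eq i j) then show ?case by simp
next
  case (Neg \<phi>)
  have "sat I v \<phi> = sat I w \<phi>" by (rule Neg.IH) (use Neg.prems in simp)
  then show ?case by simp
next
  case (Conj \<phi> \<psi>)
  have "sat I v \<phi> = sat I w \<phi>" by (rule Conj.IH(1)) (use Conj.prems in simp)
  moreover have "sat I v \<psi> = sat I w \<psi>" by (rule Conj.IH(2)) (use Conj.prems in simp)
  ultimately show ?case by simp
qed

definition pf_definable :: "('r \<Rightarrow> 'a list \<Rightarrow> bool) \<Rightarrow> nat set \<Rightarrow> ((nat \<Rightarrow> 'a) \<Rightarrow> bool) \<Rightarrow> bool" where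
  "pf_definable I V Q \<longleftrightarrow> (\<exists>\<phi>. fv \<phi> \<subseteq> V \<and> (\<forall>v. Q v = sat I v \<phi>))"

lemma pf_definable_cong: "pf_definable I V Q \<Longrightarrow> (\<And>i. i \<in> V \<Longrightarrow> v i = w i) \<Longrightarrow> Q v = Q w"
proof -
  assume "pf_definable I V Q" and h: "\<And>i. i \<in> V \<Longrightarrow> v i = w i"
  then obtain \<phi> where "fv \<phi> \<subseteq> V" "\<forall>v. Q v = sat I v \<phi>" unfolding pf_definable_def by blast
  moreover have "sat I v \<phi> = sat I w \<phi>" by (rule sat_cong) (use h \<open>fv \<phi> \<subseteq> V\<close> in blast)
  ultimately show "Q v = Q w" by simp
qed

lemma pf_definable_mono: "pf_definable I V Q \<Longrightarrow> V \<subseteq> W \<Longrightarrow> pf_definable I W Q"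
  unfolding pf_definable_def by blast

lemma pf_definable_conj: "pf_definable I V P \<Longrightarrow> pf_definable I V Q \<Longrightarrow> pf_definable I V (\<lambda>v. P v \<and> Q v)"
  unfolding pf_definable_def
proof (elim exE conjE)
  fix \<phi> \<psi> assume "fv \<phi> \<subseteq> V" "\<forall>v. P v = sat I v \<phi>" "fv \<psi> \<subseteq> V" "\<forall>v. Q v = sat I v \<psi>"
  then show "\<exists>\<theta>. fv \<theta> \<subseteq> V \<and> (\<forall>v. (P v \<and> Q v) = sat I v \<theta>)"
    by (intro exI[of _ "Conj \<phi> \<psi>"]) auto
qed

lemma pf_definable_neg: "pf_definable I V P \<Longrightarrow> pf_definable I V (\<lambda>v. \<not> P v)"
  unfolding pf_definable_def
proof (elim exE conjE)
  fix \<phi> assume "fv \<phi> \<subseteq> V" "\<forall>v. P v = sat I v \<phi>"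
  then show "\<exists>\<theta>. fv \<theta> \<subseteq> V \<and> (\<forall>v. (\<not> P v) = sat I v \<theta>)"
    by (intro exI[of _ "Neg \<phi>"]) auto
qed

lemma pf_definable_eq: "i \<in> V \<Longrightarrow> j \<in> V \<Longrightarrow> pf_definable I V (\<lambda>v. v i = v j)"
  unfolding pf_definable_def by (intro exI[of _ "Eq i j"]) auto

lemma pf_definable_true: "pf_definable I V (\<lambda>v. True)"
  unfolding pf_definable_def by (intro exI[of _ "Ex 0 (Eq 0 0)"]) auto

lemma pf_definable_ex: "pf_definable I V Q \<Longrightarrow> pf_definable I (V - {j}) (\<lambda>v. \<exists>a. Q (v(j := a)))"
  unfolding pf_definable_def
proof (elim exE conjE)
  fix \<phi> assume "fv \<phi> \<subseteq> V" "\<forall>v. Q v = sat I v \<phi>"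
  then show "\<exists>\<theta>. fv \<theta> \<subseteq> V - {j} \<and> (\<forall>v. (\<exists>a. Q (v(j := a))) = sat I v \<theta>)"
    by (intro exI[of _ "Ex j \<phi>"]) auto
qed

lemma pf_definable_conj_fin:
  "finite K \<Longrightarrow> (\<And>k. k \<in> K \<Longrightarrow> pf_definable I V (Q k)) \<Longrightarrow> pf_definable I V (\<lambda>v. \<forall>k\<in>K. Q k v)"
proof (induction K rule: finite_induct)
  case empty then show ?case using pf_definable_true by simp
next
  case (insert k K)
  have a: "pf_definable I V (Q k)" using insert.prems by simp
  have b: "pf_definable I V (\<lambda>v. \<forall>k\<in>K. Q k v)" by (rule insert.IH) (rule insert.prems, simp)
  have "pf_definable I V (\<lambda>v. Q k v \<and> (\<forall>k\<in>K. Q k v))"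
    using pf_definable_conj[OF a b] .
  moreover have "(\<lambda>v. Q k v \<and> (\<forall>k\<in>K. Q k v)) = (\<lambda>v. \<forall>k\<in>insert k K. Q k v)" by (simp only: ball_simps)
  ultimately show ?case by (simp only:)
qed

lemma pf_definable_exs:
  "finite Y \<Longrightarrow> pf_definable I V Q \<Longrightarrow>
     pf_definable I (V - Y) (\<lambda>v. \<exists>w. Q (\<lambda>i. if i \<in> Y then w i else v i))"
proof (induction Y rule: finite_induct)
  case empty then show ?case by simp
next
  case (insert y Y)
  define R where "R = (\<lambda>v. \<exists>w. Q (\<lambda>i. if i \<in> Y then w i else v i))"
  have d1: "pf_definable I (V - Y - {y}) (\<lambda>v. \<exists>a. R (v(y:=a)))"
    unfolding R_def by (rule pf_definable_ex[OF insert.IH[OF insert.prems]])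
  have eqv: "(\<exists>a. R (v(y:=a))) =
      (\<exists>w. Q (\<lambda>i. if i \<in> insert y Y then w i else v i))" for v
  proof
    assume "\<exists>a. R (v(y:=a))"
    then obtain a w where "Q (\<lambda>i. if i \<in> Y then w i else (v(y:=a)) i)" unfolding R_def by blast
    moreover have "(\<lambda>i. if i \<in> Y then w i else (v(y:=a)) i) = (\<lambda>i. if i \<in> insert y Y then (w(y:=a)) i else v i)"
      using insert.hyps by (auto simp: fun_eq_iff)
    ultimately show "\<exists>w. Q (\<lambda>i. if i \<in> insert y Y then w i else v i)" by metis
  next
    assume "\<exists>w. Q (\<lambda>i. if i \<in> insert y Y then w i else v i)"
    then obtain w where "Q (\<lambda>i. if i \<in> insert y Y then w i else v i)" by blast
    moreover have "(\<lambda>i. if i \<in> insert y Y then w i else v i) = (\<lambda>i. if i \<in> Y then w i else (v(y:=w y)) i)"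
      using insert.hyps by (auto simp: fun_eq_iff)
    ultimately show "\<exists>a. R (v(y:=a))" unfolding R_def by metis
  qed
  have e2: "(\<lambda>v. \<exists>a. R (v(y:=a))) = (\<lambda>v. \<exists>w. Q (\<lambda>i. if i \<in> insert y Y then w i else v i))"
    using eqv by (intro ext)
  have e3: "V - Y - {y} = V - insert y Y" by blast
  show ?case using d1 unfolding e2 e3 .
qed

lemma pf_definable_rename: "inj g \<Longrightarrow> pf_definable I V Q \<Longrightarrow> pf_definable I (g ` V) (\<lambda>v. Q (v \<circ> g))"
  unfolding pf_definable_def
proof (elim exE conjE)
  fix \<phi> assume "inj g" "fv \<phi> \<subseteq> V" "\<forall>v. Q v = sat I v \<phi>"
  then show "\<exists>\<theta>. fv \<theta> \<subseteq> g ` V \<and> (\<forall>v. Q (v \<circ> g) = sat I v \<theta>)"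
  proof (intro exI[of _ "rename_fm g \<phi>"] conjI allI)
    show "fv (rename_fm g \<phi>) \<subseteq> g ` V" using \<open>inj g\<close> \<open>fv \<phi> \<subseteq> V\<close> by (simp add: fv_rename_fm image_mono)
    fix v show "Q (v \<circ> g) = sat I v (rename_fm g \<phi>)" using \<open>inj g\<close> \<open>\<forall>v. Q v = sat I v \<phi>\<close> by (simp only: sat_rename_fm)
  qed
qed

text \<open>A substitution need not be injective: rename \<open>V\<close> apart into fresh variables, equate
  each copy with the image of its original, and quantify the copies away.\<close>

lemma pf_definable_subst:
  assumes "finite V" "finite W" "g ` V \<subseteq> W" "pf_definable I V Q"
  shows "pf_definable I W (\<lambda>v. Q (v \<circ> g))"
proof -
  obtain M where M: "\<forall>i\<in>V \<union> W. i < M" using finite_nat_set_iff_bounded assms(1,2) by (meson finite_UnI)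
  define h where "h = (\<lambda>i::nat. M + i)"
  have injh: "inj h" unfolding h_def by (simp add: inj_on_def)
  have d1: "pf_definable I (h ` V) (\<lambda>v. Q (v \<circ> h))" using pf_definable_rename[OF injh assms(4)] .
  define R where "R = (\<lambda>v. Q (v \<circ> h) \<and> (\<forall>i\<in>V. v (h i) = v (g i)))"
  have dR: "pf_definable I (h ` V \<union> W) R"
    unfolding R_def
  proof (rule pf_definable_conj)
    show "pf_definable I (h ` V \<union> W) (\<lambda>v. Q (v \<circ> h))" using pf_definable_mono[OF d1] by blast
    show "pf_definable I (h ` V \<union> W) (\<lambda>v. \<forall>i\<in>V. v (h i) = v (g i))"
      by (rule pf_definable_conj_fin) (use assms(1,3) in \<open>auto intro!: pf_definable_eq\<close>)
  qed
  have fin: "finite (h ` V)" using assms(1) by simp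
  have disj: "(h ` V \<union> W) - h ` V = W" using M unfolding h_def by auto
  have d2: "pf_definable I W (\<lambda>v. \<exists>w. R (\<lambda>i. if i \<in> h ` V then w i else v i))"
    using pf_definable_exs[OF fin dR] disj by simp
  have eq: "(\<exists>w. R (\<lambda>i. if i \<in> h ` V then w i else v i)) = Q (v \<circ> g)" for v
  proof
    assume "\<exists>w. R (\<lambda>i. if i \<in> h ` V then w i else v i)"
    then obtain w where w: "R (\<lambda>i. if i \<in> h ` V then w i else v i)" by blast
    define u where "u = (\<lambda>i. if i \<in> h ` V then w i else v i)"
    have "Q (u \<circ> h)" and e: "\<forall>i\<in>V. u (h i) = u (g i)" using w unfolding R_def u_def by auto
    moreover have "\<forall>i\<in>V. (u \<circ> h) i = (v \<circ> g) i"
    proof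
      fix i assume "i \<in> V"
      then have "g i \<in> W" using assms(3) by auto
      then have "g i \<notin> h ` V" using M unfolding h_def by auto
      then show "(u \<circ> h) i = (v \<circ> g) i" using e \<open>i \<in> V\<close> unfolding u_def by auto
    qed
    ultimately show "Q (v \<circ> g)" using pf_definable_cong[OF assms(4)] by metis
  next
    assume q: "Q (v \<circ> g)"
    define w where "w = (\<lambda>j. v (g (j - M)))"
    define u where "u = (\<lambda>i. if i \<in> h ` V then w i else v i)"
    have gi: "\<forall>i\<in>V. g i \<notin> h ` V" using M assms(3) unfolding h_def by fastforce
    have "\<forall>i\<in>V. (u \<circ> h) i = (v \<circ> g) i" unfolding u_def w_def h_def by auto
    then have "Q (u \<circ> h)" using q pf_definable_cong[OF assms(4)] by metis
    moreover have "\<forall>i\<in>V. u (h i) = u (g i)" using gi unfolding u_def w_def h_def by auto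
    ultimately show "\<exists>w. R (\<lambda>i. if i \<in> h ` V then w i else v i)"
      unfolding R_def u_def by blast
  qed
  show ?thesis using d2 eq by simp
qed

text \<open>Equivalent to the formula form \<open>definable_pred_iff_fm\<close>; keeping the parameters in
  finitely many auxiliary variables \<open>W\<close> makes the closure properties below easy to prove.\<close>

definition definable_pred :: "('r \<Rightarrow> 'a list \<Rightarrow> bool) \<Rightarrow> 'a set \<Rightarrow> nat set \<Rightarrow> ((nat \<Rightarrow> 'a) \<Rightarrow> bool) \<Rightarrow> bool" where
  "definable_pred I A V P \<longleftrightarrow> (\<exists>W Q a. finite W \<and> W \<inter> V = {} \<and> pf_definable I (V \<union> W) Q \<and> a ` W \<subseteq> A \<and>
      (\<forall>v. P v = Q (\<lambda>i. if i \<in> W then a i else v i)))"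

lemma definable_pred_fresh:
  assumes "finite F" "finite V" "definable_pred I A V P"
  shows "\<exists>W Q a. finite W \<and> W \<inter> V = {} \<and> W \<inter> F = {} \<and> pf_definable I (V \<union> W) Q \<and> a ` W \<subseteq> A \<and>
      (\<forall>v. P v = Q (\<lambda>i. if i \<in> W then a i else v i))"
proof -
  obtain W Q a where W: "finite W" "W \<inter> V = {}" "pf_definable I (V \<union> W) Q" "a ` W \<subseteq> A"
    and P: "\<forall>v. P v = Q (\<lambda>i. if i \<in> W then a i else v i)"
    using assms(3) unfolding definable_pred_def by blast
  obtain M where M: "\<forall>i\<in>V \<union> W \<union> F. i < M" using finite_nat_set_iff_bounded assms(1,2) W(1) by (meson finite_UnI)
  define h where "h = (\<lambda>i. if i \<in> W then M + i else i)"
  define W' where "W' = (\<lambda>i. M + i) ` W"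
  define a' where "a' = (\<lambda>j. a (j - M))"
  have hV: "h ` (V \<union> W) \<subseteq> V \<union> W'" unfolding h_def W'_def by auto
  have d: "pf_definable I (V \<union> W') (\<lambda>u. Q (u \<circ> h))"
    by (rule pf_definable_subst[OF _ _ hV W(3)]) (use assms(2) W(1) in \<open>simp_all add: W'_def\<close>)
  have W'V: "W' \<inter> V = {}" and W'F: "W' \<inter> F = {}" using M unfolding W'_def by auto
  have aW: "a' ` W' \<subseteq> A" using W(4) unfolding W'_def a'_def by auto
  have "P v = Q ((\<lambda>j. if j \<in> W' then a' j else v j) \<circ> h)" for v
  proof -
    have "Q (\<lambda>i. if i \<in> W then a i else v i) = Q ((\<lambda>j. if j \<in> W' then a' j else v j) \<circ> h)"
    proof (rule pf_definable_cong[OF W(3)])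
      fix i assume i: "i \<in> V \<union> W"
      show "(if i \<in> W then a i else v i) = ((\<lambda>j. if j \<in> W' then a' j else v j) \<circ> h) i"
      proof (cases "i \<in> W")
        case True then show ?thesis unfolding h_def W'_def a'_def by auto
      next
        case False
        then have "i \<in> V" using i by blast
        then have "i \<notin> W'" using M unfolding W'_def by auto
        then show ?thesis using False unfolding h_def by simp
      qed
    qed
    then show ?thesis using P by simp
  qed
  then show ?thesis using d W'V W'F aW W(1) unfolding W'_def by blast
qed

lemma definable_pred_cong: "definable_pred I A V P \<Longrightarrow> (\<And>i. i \<in> V \<Longrightarrow> v i = w i) \<Longrightarrow> P v = P w"
proof -
  assume "definable_pred I A V P" and h: "\<And>i. i \<in> V \<Longrightarrow> v i = w i"
  then obtain W Q a where W: "W \<inter> V = {}" "pf_definable I (V \<union> W) Q"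
    and P: "\<forall>v. P v = Q (\<lambda>i. if i \<in> W then a i else v i)"
    unfolding definable_pred_def by blast
  have "Q (\<lambda>i. if i \<in> W then a i else v i) = Q (\<lambda>i. if i \<in> W then a i else w i)"
    by (rule pf_definable_cong[OF W(2)]) (use h in auto)
  then show "P v = P w" using P by simp
qed

lemma definable_pred_of_pf: "pf_definable I V Q \<Longrightarrow> definable_pred I A V Q"
  unfolding definable_pred_def by (intro exI[of _ "{}"] exI[of _ Q]) simp

lemma definable_pred_true: "definable_pred I A V (\<lambda>v. True)"
  by (rule definable_pred_of_pf[OF pf_definable_true])

lemma definable_pred_eq: "i \<in> V \<Longrightarrow> j \<in> V \<Longrightarrow> definable_pred I A V (\<lambda>v. v i = v j)"
  by (rule definable_pred_of_pf[OF pf_definable_eq])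

lemma definable_pred_mono_params: "definable_pred I A V P \<Longrightarrow> A \<subseteq> B \<Longrightarrow> definable_pred I B V P"
  unfolding definable_pred_def by (meson order_trans)

lemma definable_pred_neg: "definable_pred I A V P \<Longrightarrow> definable_pred I A V (\<lambda>v. \<not> P v)"
proof -
  assume "definable_pred I A V P"
  then obtain W Q a where W: "finite W" "W \<inter> V = {}" "pf_definable I (V \<union> W) Q" "a ` W \<subseteq> A"
    and P: "\<forall>v. P v = Q (\<lambda>i. if i \<in> W then a i else v i)"
    unfolding definable_pred_def by blast
  show ?thesis unfolding definable_pred_def
    by (rule exI[of _ W], rule exI[of _ "\<lambda>v. \<not> Q v"], rule exI[of _ a]) (use W P pf_definable_neg in auto)
qed

lemma definable_pred_mono_vars: "finite V' \<Longrightarrow> V \<subseteq> V' \<Longrightarrow> definable_pred I A V P \<Longrightarrow> definable_pred I A V' P"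
proof -
  assume f: "finite V'" and s: "V \<subseteq> V'" and d: "definable_pred I A V P"
  have fV: "finite V" using f s finite_subset by blast
  obtain W Q a where W: "finite W" "W \<inter> V = {}" "W \<inter> V' = {}" "pf_definable I (V \<union> W) Q" "a ` W \<subseteq> A"
    and P: "\<forall>v. P v = Q (\<lambda>i. if i \<in> W then a i else v i)"
    using definable_pred_fresh[OF f fV d] by blast
  have "pf_definable I (V' \<union> W) Q" using pf_definable_mono[OF W(4)] s by blast
  then show ?thesis unfolding definable_pred_def using W P by blast
qed

lemma definable_pred_conj:
  assumes "finite V" "definable_pred I A V P1" "definable_pred I A V P2"
  shows "definable_pred I A V (\<lambda>v. P1 v \<and> P2 v)"
proof -
  obtain W1 Q1 a1 where W1: "finite W1" "W1 \<inter> V = {}" "pf_definable I (V \<union> W1) Q1" "a1 ` W1 \<subseteq> A"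
    and P1: "\<forall>v. P1 v = Q1 (\<lambda>i. if i \<in> W1 then a1 i else v i)"
    using assms(2) unfolding definable_pred_def by blast
  obtain W2 Q2 a2 where W2: "finite W2" "W2 \<inter> V = {}" "W2 \<inter> W1 = {}" "pf_definable I (V \<union> W2) Q2" "a2 ` W2 \<subseteq> A"
    and P2: "\<forall>v. P2 v = Q2 (\<lambda>i. if i \<in> W2 then a2 i else v i)"
    using definable_pred_fresh[OF W1(1) assms(1) assms(3)] by blast
  define a where "a = (\<lambda>i. if i \<in> W1 then a1 i else a2 i)"
  define Q where "Q = (\<lambda>v. Q1 v \<and> Q2 v)"
  have dQ: "pf_definable I (V \<union> (W1 \<union> W2)) Q" unfolding Q_def
    by (rule pf_definable_conj; rule pf_definable_mono[OF W1(3)] pf_definable_mono[OF W2(4)]) auto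
  have "P1 v \<and> P2 v \<longleftrightarrow> Q (\<lambda>i. if i \<in> W1 \<union> W2 then a i else v i)" for v
  proof -
    have "Q1 (\<lambda>i. if i \<in> W1 then a1 i else v i) = Q1 (\<lambda>i. if i \<in> W1 \<union> W2 then a i else v i)"
      by (rule pf_definable_cong[OF W1(3)]) (use W2(2) W2(3) in \<open>auto simp: a_def\<close>)
    moreover have "Q2 (\<lambda>i. if i \<in> W2 then a2 i else v i) = Q2 (\<lambda>i. if i \<in> W1 \<union> W2 then a i else v i)"
      by (rule pf_definable_cong[OF W2(4)]) (use W2(2) W2(3) W1(2) in \<open>auto simp: a_def\<close>)
    ultimately show ?thesis using P1 P2 unfolding Q_def by simp
  qed
  moreover have "a ` (W1 \<union> W2) \<subseteq> A" using W1(4) W2(5) W2(3) unfolding a_def by auto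
  moreover have "(W1 \<union> W2) \<inter> V = {}" "finite (W1 \<union> W2)" using W1 W2 by auto
  ultimately show ?thesis unfolding definable_pred_def using dQ by blast
qed

lemma definable_pred_conj_fin:
  assumes "finite V" "finite K" "\<And>k. k \<in> K \<Longrightarrow> definable_pred I A V (P k)"
  shows "definable_pred I A V (\<lambda>v. \<forall>k\<in>K. P k v)"
  using assms(2,3)
proof (induction K rule: finite_induct)
  case empty then show ?case using definable_pred_true by simp
next
  case (insert k K)
  have a: "definable_pred I A V (P k)" by (rule insert.prems) simp
  have b: "definable_pred I A V (\<lambda>v. \<forall>k\<in>K. P k v)" by (rule insert.IH) (rule insert.prems, simp)
  have "definable_pred I A V (\<lambda>v. P k v \<and> (\<forall>k\<in>K. P k v))" using definable_pred_conj[OF assms(1) a b] .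
  moreover have "(\<lambda>v. P k v \<and> (\<forall>k\<in>K. P k v)) = (\<lambda>v. \<forall>k\<in>insert k K. P k v)" by (simp only: ball_simps)
  ultimately show ?case by (simp only:)
qed

lemma definable_pred_exs:
  assumes "finite Y" "Y \<subseteq> V" "definable_pred I A V P"
  shows "definable_pred I A (V - Y) (\<lambda>v. \<exists>w. P (\<lambda>i. if i \<in> Y then w i else v i))"
proof -
  obtain W Q a where W: "finite W" "W \<inter> V = {}" "pf_definable I (V \<union> W) Q" "a ` W \<subseteq> A"
    and P: "\<forall>v. P v = Q (\<lambda>i. if i \<in> W then a i else v i)"
    using assms(3) unfolding definable_pred_def by blast
  define Q' where "Q' = (\<lambda>v. \<exists>w. Q (\<lambda>i. if i \<in> Y then w i else v i))"
  have d: "pf_definable I ((V \<union> W) - Y) Q'"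
    unfolding Q'_def by (rule pf_definable_exs[OF assms(1) W(3)])
  have e: "(V \<union> W) - Y = (V - Y) \<union> W" using W(2) assms(2) by blast
  have WY: "W \<inter> Y = {}" using W(2) assms(2) by blast
  have eq: "(\<exists>w. P (\<lambda>i. if i \<in> Y then w i else v i)) = Q' (\<lambda>i. if i \<in> W then a i else v i)" for v
  proof -
    have f: "(\<lambda>i. if i \<in> W then a i else (if i \<in> Y then w i else v i)) =
        (\<lambda>i. if i \<in> Y then w i else (if i \<in> W then a i else v i))" for w
      using WY by (auto simp: fun_eq_iff)
    have "P (\<lambda>i. if i \<in> Y then w i else v i) = Q (\<lambda>i. if i \<in> Y then w i else (if i \<in> W then a i else v i))" for w
    proof -
      have "P (\<lambda>i. if i \<in> Y then w i else v i) = Q (\<lambda>i. if i \<in> W then a i else (if i \<in> Y then w i else v i))"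
        using P by (rule allE) simp
      also have "\<dots> = Q (\<lambda>i. if i \<in> Y then w i else (if i \<in> W then a i else v i))" by (simp only: f)
      finally show ?thesis .
    qed
    then show ?thesis unfolding Q'_def by simp
  qed
  have "W \<inter> (V - Y) = {}" using W(2) by blast
  then show ?thesis unfolding definable_pred_def
    by (rule_tac exI[of _ W], rule_tac exI[of _ Q'], rule_tac exI[of _ a]) (use W(1,4) d e eq in simp)
qed

lemma definable_pred_ex:
  assumes "j \<in> V" "definable_pred I A V P"
  shows "definable_pred I A (V - {j}) (\<lambda>v. \<exists>a. P (v(j := a)))"
proof -
  have "finite {j}" "{j} \<subseteq> V" using assms(1) by auto
  then have d: "definable_pred I A (V - {j}) (\<lambda>v. \<exists>w. P (\<lambda>i. if i \<in> {j} then w i else v i))"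
    using definable_pred_exs assms(2) by blast
  have "(\<exists>w. P (\<lambda>i. if i \<in> {j} then w i else v i)) = (\<exists>a. P (v(j := a)))" for v
  proof
    assume "\<exists>w. P (\<lambda>i. if i \<in> {j} then w i else v i)"
    then obtain w where p: "P (\<lambda>i. if i \<in> {j} then w i else v i)" by blast
    have eq: "(\<lambda>i. if i \<in> {j} then w i else v i) = v(j := w j)" by (auto simp: fun_eq_iff)
    from p have "P (v(j := w j))" by (simp only: eq)
    then show "\<exists>a. P (v(j := a))" by blast
  next
    assume "\<exists>a. P (v(j := a))"
    then obtain a where p: "P (v(j := a))" by blast
    have eq: "(\<lambda>i. if i \<in> {j} then (\<lambda>_. a) i else v i) = v(j := a)" by (auto simp: fun_eq_iff)
    from p have "P (\<lambda>i. if i \<in> {j} then (\<lambda>_. a) i else v i)" by (simp only: eq)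
    then show "\<exists>w. P (\<lambda>i. if i \<in> {j} then w i else v i)" by (rule exI[of _ "\<lambda>_. a"])
  qed
  then have "(\<lambda>v. \<exists>w. P (\<lambda>i. if i \<in> {j} then w i else v i)) = (\<lambda>v. \<exists>a. P (v(j := a)))" by (intro ext)
  with d show ?thesis by (simp only:)
qed

lemma definable_pred_subst:
  assumes "finite V" "finite V'" "g ` V \<subseteq> V'" "definable_pred I A V P"
  shows "definable_pred I A V' (\<lambda>v. P (v \<circ> g))"
proof -
  obtain W Q a where W: "finite W" "W \<inter> V = {}" "W \<inter> V' = {}" "pf_definable I (V \<union> W) Q" "a ` W \<subseteq> A"
    and P: "\<forall>v. P v = Q (\<lambda>i. if i \<in> W then a i else v i)"
    using definable_pred_fresh[OF assms(2) assms(1) assms(4)] by blast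
  define g' where "g' = (\<lambda>i. if i \<in> W then i else g i)"
  have gV: "g' ` (V \<union> W) \<subseteq> V' \<union> W" using assms(3) W(2) unfolding g'_def by auto
  have d: "pf_definable I (V' \<union> W) (\<lambda>u. Q (u \<circ> g'))"
    by (rule pf_definable_subst[OF _ _ gV W(4)]) (use assms(1,2) W(1) in auto)
  have "P (v \<circ> g) = Q ((\<lambda>i. if i \<in> W then a i else v i) \<circ> g')" for v
  proof -
    have "Q (\<lambda>i. if i \<in> W then a i else (v \<circ> g) i) = Q ((\<lambda>i. if i \<in> W then a i else v i) \<circ> g')"
    proof (rule pf_definable_cong[OF W(4)])
      fix i assume i: "i \<in> V \<union> W"
      show "(if i \<in> W then a i else (v \<circ> g) i) = ((\<lambda>i. if i \<in> W then a i else v i) \<circ> g') i"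
      proof (cases "i \<in> W")
        case True then show ?thesis unfolding g'_def by simp
      next
        case False
        then have "i \<in> V" using i by blast
        then have "g i \<notin> W" using assms(3) W(3) by blast
        then show ?thesis using False unfolding g'_def by simp
      qed
    qed
    then show ?thesis using P by simp
  qed
  then show ?thesis unfolding definable_pred_def using d W(1,3,5) by blast
qed

lemma definable_pred_inst:
  assumes "finite Y" "Y \<subseteq> V" "b ` Y \<subseteq> A" "definable_pred I A V P"
  shows "definable_pred I A (V - Y) (\<lambda>v. P (\<lambda>i. if i \<in> Y then b i else v i))"
proof -
  obtain W Q a where W: "finite W" "W \<inter> V = {}" "pf_definable I (V \<union> W) Q" "a ` W \<subseteq> A"
    and P: "\<forall>v. P v = Q (\<lambda>i. if i \<in> W then a i else v i)"
    using assms(4) unfolding definable_pred_def by blast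
  define a' where "a' = (\<lambda>i. if i \<in> Y then b i else a i)"
  have e: "(V - Y) \<union> (W \<union> Y) = V \<union> W" using assms(2) by blast
  have "P (\<lambda>i. if i \<in> Y then b i else v i) = Q (\<lambda>i. if i \<in> W \<union> Y then a' i else v i)" for v
  proof -
    have "(\<lambda>i. if i \<in> W then a i else (if i \<in> Y then b i else v i)) = (\<lambda>i. if i \<in> W \<union> Y then a' i else v i)"
      using W(2) assms(2) unfolding a'_def by (auto simp: fun_eq_iff)
    then show ?thesis using P by simp
  qed
  moreover have "a' ` (W \<union> Y) \<subseteq> A" using W(4) assms(3) unfolding a'_def by auto
  moreover have "(W \<union> Y) \<inter> (V - Y) = {}" "finite (W \<union> Y)" using W(1,2) assms(1) by auto
  ultimately show ?thesis unfolding definable_pred_def using W(3) e by (intro exI[of _ "W \<union> Y"]) auto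
qed

lemma definable_pred_abstract_param:
  assumes "finite V" "z \<notin> V" "definable_pred I (A \<union> {c}) V P"
  shows "\<exists>Q. definable_pred I A (insert z V) Q \<and> (\<forall>v. P v = Q (v(z := c)))"
proof -
  obtain W Q a where W: "finite W" "W \<inter> V = {}" "W \<inter> {z} = {}" "pf_definable I (V \<union> W) Q" "a ` W \<subseteq> A \<union> {c}"
    and P: "\<forall>v. P v = Q (\<lambda>i. if i \<in> W then a i else v i)"
    using definable_pred_fresh[of "{z}", OF _ assms(1) assms(3)] by blast
  define Wc where "Wc = {i \<in> W. a i \<notin> A}"
  define g where "g = (\<lambda>i. if i \<in> Wc then z else i)"
  have gV: "g ` (V \<union> W) \<subseteq> insert z V \<union> (W - Wc)" unfolding g_def by auto
  have d: "pf_definable I (insert z V \<union> (W - Wc)) (\<lambda>u. Q (u \<circ> g))"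
    by (rule pf_definable_subst[OF _ _ gV W(4)]) (use assms(1) W(1) in auto)
  define Q' where "Q' = (\<lambda>v. Q ((\<lambda>i. if i \<in> W - Wc then a i else v i) \<circ> g))"
  have dQ': "definable_pred I A (insert z V) Q'"
    unfolding definable_pred_def Q'_def
  proof (intro exI conjI allI)
    show "finite (W - Wc)" using W(1) by simp
    show "(W - Wc) \<inter> insert z V = {}" using W(2,3) by auto
    show "a ` (W - Wc) \<subseteq> A" unfolding Wc_def by auto
  qed (rule d, rule refl)
  have "P v = Q' (v(z := c))" for v
  proof -
    have "Q (\<lambda>i. if i \<in> W then a i else v i) = Q ((\<lambda>i. if i \<in> W - Wc then a i else (v(z := c)) i) \<circ> g)"
    proof (rule pf_definable_cong[OF W(4)])
      fix i assume i: "i \<in> V \<union> W"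
      show "(if i \<in> W then a i else v i) = ((\<lambda>i. if i \<in> W - Wc then a i else (v(z := c)) i) \<circ> g) i"
      proof (cases "i \<in> Wc")
        case True
        then have "a i = c" using W(5) unfolding Wc_def by auto
        moreover have "z \<notin> W" using W(3) by auto
        ultimately show ?thesis using True unfolding g_def Wc_def by auto
      next
        case False
        then have gi: "g i = i" unfolding g_def by simp
        show ?thesis
        proof (cases "i \<in> W")
          case True then show ?thesis using False gi by simp
        next
          case F2: False
          then have "i \<in> V" using i by blast
          then have "i \<noteq> z" using assms(2) by blast
          then show ?thesis using False F2 gi by simp
        qed
      qed
    qed
    then show ?thesis using P unfolding Q'_def by simp
  qed
  then show ?thesis using dQ' by blast
qed

lemma definable_pred_abstract_params:
  "definable_pred I (A \<union> c ` {..<k}) {0} P \<Longrightarrow>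
     \<exists>Q. definable_pred I A {..k} Q \<and> (\<forall>v. P v = Q (\<lambda>i. if 0 < i \<and> i \<le> k then c (i - 1) else v i))"
proof (induction k arbitrary: A P)
  case 0
  have "(\<lambda>i. if 0 < i \<and> i \<le> (0::nat) then c (i - 1) else v i) = v" for v by (auto simp: fun_eq_iff)
  moreover have "definable_pred I A {..0} P" using 0 by (simp add: atMost_0)
  ultimately show ?case by (intro exI[of _ P]) simp
next
  case (Suc k)
  have e: "A \<union> c ` {..<Suc k} = (A \<union> {c k}) \<union> c ` {..<k}" by (auto simp: lessThan_Suc)
  obtain Q1 where Q1: "definable_pred I (A \<union> {c k}) {..k} Q1"
      "\<forall>v. P v = Q1 (\<lambda>i. if 0 < i \<and> i \<le> k then c (i - 1) else v i)"
    using Suc.IH[of "A \<union> {c k}" P] Suc.prems unfolding e by blast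
  obtain Q2 where Q2: "definable_pred I A (insert (Suc k) {..k}) Q2" "\<forall>v. Q1 v = Q2 (v(Suc k := c k))"
    using definable_pred_abstract_param[of "{..k}" "Suc k" I A "c k" Q1] Q1(1) by auto
  have e2: "insert (Suc k) {..k} = {..Suc k}" by auto
  have e3: "(\<lambda>i. if 0 < i \<and> i \<le> k then c (i - 1) else v i)(Suc k := c k) =
      (\<lambda>i. if 0 < i \<and> i \<le> Suc k then c (i - 1) else v i)" for v
    by (auto simp: fun_eq_iff)
  have "P v = Q2 (\<lambda>i. if 0 < i \<and> i \<le> Suc k then c (i - 1) else v i)" for v
  proof -
    have "P v = Q1 (\<lambda>i. if 0 < i \<and> i \<le> k then c (i - 1) else v i)" using Q1(2) by blast
    also have "\<dots> = Q2 ((\<lambda>i. if 0 < i \<and> i \<le> k then c (i - 1) else v i)(Suc k := c k))"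
      using Q2(2) by blast
    also have "\<dots> = Q2 (\<lambda>i. if 0 < i \<and> i \<le> Suc k then c (i - 1) else v i)" by (simp only: e3)
    finally show ?thesis .
  qed
  then show ?case using Q2(1) unfolding e2 by blast
qed

lemma definable_pred_finite_params: "definable_pred I A V P \<Longrightarrow> \<exists>A0. finite A0 \<and> A0 \<subseteq> A \<and> definable_pred I A0 V P"
proof -
  assume "definable_pred I A V P"
  then obtain W Q a where W: "finite W" "W \<inter> V = {}" "pf_definable I (V \<union> W) Q" "a ` W \<subseteq> A"
    and P: "\<forall>v. P v = Q (\<lambda>i. if i \<in> W then a i else v i)"
    unfolding definable_pred_def by blast
  have "definable_pred I (a ` W) V P" unfolding definable_pred_def using W P by blast
  then show ?thesis using W(1,4) by blast
qed

lemma definable_pred_iff_fm: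
  "definable_pred I A V P \<longleftrightarrow> (\<exists>\<phi> p. (\<forall>i\<in>fv \<phi>. i \<notin> V \<longrightarrow> p i \<in> A) \<and>
      (\<forall>v. P v = sat I (\<lambda>i. if i \<in> V then v i else p i) \<phi>))"
proof
  assume "definable_pred I A V P"
  then obtain W Q a where W: "finite W" "W \<inter> V = {}" "pf_definable I (V \<union> W) Q" "a ` W \<subseteq> A"
    and P: "\<forall>v. P v = Q (\<lambda>i. if i \<in> W then a i else v i)"
    unfolding definable_pred_def by blast
  obtain \<phi> where \<phi>: "fv \<phi> \<subseteq> V \<union> W" "\<forall>v. Q v = sat I v \<phi>" using W(3) unfolding pf_definable_def by blast
  have "P v = sat I (\<lambda>i. if i \<in> V then v i else a i) \<phi>" for v
  proof -
    have "sat I (\<lambda>i. if i \<in> W then a i else v i) \<phi> = sat I (\<lambda>i. if i \<in> V then v i else a i) \<phi>"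
      by (rule sat_cong) (use \<phi>(1) W(2) in auto)
    then show ?thesis using P \<phi>(2) by simp
  qed
  moreover have "\<forall>i\<in>fv \<phi>. i \<notin> V \<longrightarrow> a i \<in> A" using \<phi>(1) W(4) by auto
  ultimately show "\<exists>\<phi> p. (\<forall>i\<in>fv \<phi>. i \<notin> V \<longrightarrow> p i \<in> A) \<and>
      (\<forall>v. P v = sat I (\<lambda>i. if i \<in> V then v i else p i) \<phi>)" by blast
next
  assume "\<exists>\<phi> p. (\<forall>i\<in>fv \<phi>. i \<notin> V \<longrightarrow> p i \<in> A) \<and>
      (\<forall>v. P v = sat I (\<lambda>i. if i \<in> V then v i else p i) \<phi>)"
  then obtain \<phi> p where p: "\<forall>i\<in>fv \<phi>. i \<notin> V \<longrightarrow> p i \<in> A"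
    and P: "\<forall>v. P v = sat I (\<lambda>i. if i \<in> V then v i else p i) \<phi>" by blast
  define W where "W = fv \<phi> - V"
  have d: "pf_definable I (V \<union> W) (\<lambda>v. sat I v \<phi>)" unfolding pf_definable_def W_def by auto
  have "P v = sat I (\<lambda>i. if i \<in> W then p i else v i) \<phi>" for v
  proof -
    have "sat I (\<lambda>i. if i \<in> V then v i else p i) \<phi> = sat I (\<lambda>i. if i \<in> W then p i else v i) \<phi>"
      by (rule sat_cong) (auto simp: W_def)
    then show ?thesis using P by simp
  qed
  moreover have "finite W" "W \<inter> V = {}" "p ` W \<subseteq> A" using p finite_fv unfolding W_def by auto
  ultimately show "definable_pred I A V P" unfolding definable_pred_def using d by blast
qed

lemma definable_pred_ex_coordinate:
  assumes "definable_pred I B {..<n} P" "i < n"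
  shows "definable_pred I B {0} (\<lambda>v. \<exists>u. P u \<and> u i = v 0)"
proof -
  define Q where "Q = (\<lambda>v. P (v \<circ> Suc) \<and> v 0 = v (Suc i))"
  have "definable_pred I B {..n} (\<lambda>v. P (v \<circ> Suc))"
    by (rule definable_pred_subst[OF _ _ _ assms(1)]) auto
  then have "definable_pred I B {..n} Q"
    unfolding Q_def using assms(2) by (intro definable_pred_conj definable_pred_eq) auto
  then have "definable_pred I B ({..n} - {1..n}) (\<lambda>v. \<exists>w. Q (\<lambda>j. if j \<in> {1..n} then w j else v j))"
    by (rule definable_pred_exs[rotated 2]) auto
  moreover have "{..n} - {1..n} = {0::nat}" by auto
  moreover have "(\<exists>w. Q (\<lambda>j. if j \<in> {1..n} then w j else v j)) \<longleftrightarrow> (\<exists>u. P u \<and> u i = v 0)" for v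
  proof
    assume "\<exists>w. Q (\<lambda>j. if j \<in> {1..n} then w j else v j)"
    then obtain w where w: "P ((\<lambda>j. if j \<in> {1..n} then w j else v j) \<circ> Suc)" "v 0 = w (Suc i)"
      using assms(2) unfolding Q_def by auto
    have "P ((\<lambda>j. if j \<in> {1..n} then w j else v j) \<circ> Suc) = P (\<lambda>j. w (Suc j))"
      by (rule definable_pred_cong[OF assms(1)]) auto
    then show "\<exists>u. P u \<and> u i = v 0" using w by auto
  next
    assume "\<exists>u. P u \<and> u i = v 0"
    then obtain u where u: "P u" "u i = v 0" by blast
    have "P ((\<lambda>j. if j \<in> {1..n} then u (j - 1) else v j) \<circ> Suc) = P u"
      by (rule definable_pred_cong[OF assms(1)]) auto
    then show "\<exists>w. Q (\<lambda>j. if j \<in> {1..n} then w j else v j)"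
      using u assms(2) unfolding Q_def by (intro exI[of _ "\<lambda>j. u (j - 1)"]) auto
  qed
  ultimately show ?thesis by simp
qed

lemma exists_inj_atMost_iff:
  "(\<exists>f. inj_on f {..(N::nat)} \<and> f ` {..N} \<subseteq> S) \<longleftrightarrow> \<not> (finite S \<and> card S \<le> N)"
proof
  assume "\<exists>f. inj_on f {..N} \<and> f ` {..N} \<subseteq> S"
  then obtain f where f: "inj_on f {..N}" "f ` {..N} \<subseteq> S" by blast
  show "\<not> (finite S \<and> card S \<le> N)"
  proof
    assume a: "finite S \<and> card S \<le> N"
    have "card {..N} \<le> card S" using card_inj_on_le[OF f] a by blast
    then show False using a by simp
  qed
next
  assume a: "\<not> (finite S \<and> card S \<le> N)"
  have "\<exists>T. T \<subseteq> S \<and> finite T \<and> card T = Suc N"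
  proof (cases "finite S")
    case True
    then have "Suc N \<le> card S" using a by simp
    then obtain T where "T \<subseteq> S" "card T = Suc N" using obtain_subset_with_card_n by metis
    moreover have "finite T" using \<open>T \<subseteq> S\<close> True finite_subset by blast
    ultimately show ?thesis by blast
  next
    case False
    then show ?thesis using infinite_arbitrarily_large by blast
  qed
  then obtain T where T: "T \<subseteq> S" "finite T" "card T = Suc N" by blast
  obtain h where h: "bij_betw h {0..<card T} T" using ex_bij_betw_nat_finite[OF T(2)] by blast
  have "{0..<card T} = {..N}" using T(3) by auto
  then have "inj_on h {..N} \<and> h ` {..N} \<subseteq> S" using h T(1) unfolding bij_betw_def by auto
  then show "\<exists>f. inj_on f {..N} \<and> f ` {..N} \<subseteq> S" by blast
qed

text \<open>The \<open>N + 1\<close> distinct solutions are named by the fresh variables \<open>M, \<dots>, M + N\<close>.\<close>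

lemma definable_pred_exists_inj:
  fixes N :: nat
  assumes "finite V" "j \<in> V" "definable_pred I A V P"
  shows "definable_pred I A V (\<lambda>v. \<exists>f. inj_on f {..N} \<and> f ` {..N} \<subseteq> {e. P (v(j := e))})"
proof -
  obtain M where M: "\<forall>i\<in>V. i < M" using finite_nat_set_iff_bounded assms(1) by blast
  define Y where "Y = (\<lambda>k. M + k) ` {..N}"
  have fin: "finite Y" "finite (V \<union> Y)" and VY: "V \<inter> Y = {}" using assms(1) M by (auto simp: Y_def)
  define G where "G = (\<lambda>u. (\<forall>k1\<in>{..N}. \<forall>k2\<in>{..N}. \<not> (k1 \<noteq> k2 \<and> u (M + k1) = u (M + k2))) \<and>
                          (\<forall>k\<in>{..N}. P (u \<circ> id(j := M + k))))"
  have "definable_pred I A (V \<union> Y) (\<lambda>u. \<not> (k1 \<noteq> k2 \<and> u (M + k1) = u (M + k2)))"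
    if "k1 \<le> N" "k2 \<le> N" for k1 k2
  proof (cases "k1 = k2")
    case False
    then show ?thesis using that by (auto intro!: definable_pred_neg definable_pred_eq simp: Y_def)
  qed (simp add: definable_pred_true)
  then have "definable_pred I A (V \<union> Y) (\<lambda>u. \<forall>k1\<in>{..N}. \<forall>k2\<in>{..N}. \<not> (k1 \<noteq> k2 \<and> u (M + k1) = u (M + k2)))"
    by (intro definable_pred_conj_fin[OF fin(2)]) auto
  moreover have "definable_pred I A (V \<union> Y) (\<lambda>u. \<forall>k\<in>{..N}. P (u \<circ> id(j := M + k)))"
    by (intro definable_pred_conj_fin[OF fin(2)] definable_pred_subst[OF assms(1) fin(2) _ assms(3)])
      (auto simp: Y_def)
  ultimately have dG: "definable_pred I A (V \<union> Y) G"
    unfolding G_def by (rule definable_pred_conj[OF fin(2)])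
  have "definable_pred I A ((V \<union> Y) - Y) (\<lambda>v. \<exists>w. G (\<lambda>i. if i \<in> Y then w i else v i))"
    by (rule definable_pred_exs[OF fin(1) _ dG]) simp
  moreover have "(V \<union> Y) - Y = V" using VY by blast
  moreover have "G (\<lambda>i. if i \<in> Y then w i else v i) \<longleftrightarrow>
      inj_on (\<lambda>k. w (M + k)) {..N} \<and> (\<forall>k\<le>N. P (v(j := w (M + k))))" for v w
  proof -
    have "P ((\<lambda>i. if i \<in> Y then w i else v i) \<circ> id(j := M + k)) = P (v(j := w (M + k)))" if "k \<le> N" for k
      using that assms(2) M VY by (intro definable_pred_cong[OF assms(3)]) (auto simp: Y_def)
    then show ?thesis unfolding G_def inj_on_def Y_def by auto
  qed
  moreover have "(\<exists>w. inj_on (\<lambda>k. w (M + k)) {..N} \<and> (\<forall>k\<le>N. P (v(j := w (M + k))))) \<longleftrightarrow>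
      (\<exists>f. inj_on f {..N} \<and> f ` {..N} \<subseteq> {e. P (v(j := e))})" for v
  proof
    assume "\<exists>f. inj_on f {..N} \<and> f ` {..N} \<subseteq> {e. P (v(j := e))}"
    then obtain f where "inj_on f {..N}" "f ` {..N} \<subseteq> {e. P (v(j := e))}" by blast
    then show "\<exists>w. inj_on (\<lambda>k. w (M + k)) {..N} \<and> (\<forall>k\<le>N. P (v(j := w (M + k))))"
      by (intro exI[of _ "\<lambda>i. f (i - M)"]) auto
  qed auto
  ultimately show ?thesis by simp
qed

lemma definable_pred_card_le:
  fixes N :: nat
  assumes "finite V" "j \<in> V" "definable_pred I A V P"
  shows "definable_pred I A V (\<lambda>v. finite {e. P (v(j := e))} \<and> card {e. P (v(j := e))} \<le> N)"
  using definable_pred_neg[OF definable_pred_exists_inj[OF assms, of N]] by (simp add: exists_inj_atMost_iff)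

section \<open>Algebraic closure\<close>

lemma mem_acl_iff: "b \<in> acl I A \<longleftrightarrow> (\<exists>P. definable_pred I A {0} P \<and> finite {c. P (\<lambda>_. c)} \<and> P (\<lambda>_. b))"
proof
  assume "b \<in> acl I A"
  then obtain \<phi> p where p: "\<forall>i \<in> fv \<phi>. i \<noteq> 0 \<longrightarrow> p i \<in> A"
    and f: "finite {c. sat I (p(0 := c)) \<phi>}" and b: "sat I (p(0 := b)) \<phi>"
    unfolding acl_def by blast
  define P where "P = (\<lambda>v::nat \<Rightarrow> _. sat I (p(0 := v 0)) \<phi>)"
  have e: "(\<lambda>i. if i \<in> {0} then v i else p i) = p(0 := v 0)" for v :: "nat \<Rightarrow> 'a" by (auto simp: fun_eq_iff)
  have "definable_pred I A {0} P" unfolding definable_pred_iff_fm P_def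
    by (rule exI[of _ \<phi>], rule exI[of _ p]) (use p e in simp)
  moreover have "finite {c. P (\<lambda>_. c)}" using f unfolding P_def by simp
  moreover have "P (\<lambda>_. b)" using b unfolding P_def by simp
  ultimately show "\<exists>P. definable_pred I A {0} P \<and> finite {c. P (\<lambda>_. c)} \<and> P (\<lambda>_. b)" by blast
next
  assume "\<exists>P. definable_pred I A {0} P \<and> finite {c. P (\<lambda>_. c)} \<and> P (\<lambda>_. b)"
  then obtain P where d: "definable_pred I A {0} P" and f: "finite {c. P (\<lambda>_. c)}" and b: "P (\<lambda>_. b)" by blast
  obtain \<phi> p where p: "\<forall>i\<in>fv \<phi>. i \<notin> {0} \<longrightarrow> p i \<in> A"
    and P: "\<forall>v. P v = sat I (\<lambda>i. if i \<in> {0} then v i else p i) \<phi>"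
    using d unfolding definable_pred_iff_fm by blast
  have e: "(\<lambda>i. if i \<in> {0} then (\<lambda>_. c) i else p i) = p(0 := c)" for c :: 'a by (auto simp: fun_eq_iff)
  have Pc: "P (\<lambda>_. c) = sat I (p(0 := c)) \<phi>" for c using P e by simp
  show "b \<in> acl I A" unfolding acl_def
    by (rule CollectI, rule exI[of _ \<phi>], rule exI[of _ p]) (use p f b Pc in simp)
qed

lemma acl_mono: "A \<subseteq> B \<Longrightarrow> b \<in> acl I A \<Longrightarrow> b \<in> acl I B"
  unfolding mem_acl_iff using definable_pred_mono_params by metis

lemma acl_base: "b \<in> A \<Longrightarrow> b \<in> acl I A"
proof -
  assume b: "b \<in> A"
  have d0: "definable_pred I A {0, 1} (\<lambda>v. v 0 = v 1)" by (rule definable_pred_eq) auto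
  have "definable_pred I A ({0, 1} - {1}) (\<lambda>v. (\<lambda>i. if i \<in> {1} then (\<lambda>_. b) i else v i) 0 = (\<lambda>i. if i \<in> {1} then (\<lambda>_. b) i else v i) 1)"
    by (rule definable_pred_inst[OF _ _ _ d0]) (use b in auto)
  moreover have "{0::nat, 1} - {1} = {0}" by auto
  ultimately have "definable_pred I A {0} (\<lambda>v. v 0 = b)" by simp
  moreover have "finite {c. (\<lambda>_. c) 0 = b}" by simp
  ultimately show "b \<in> acl I A" unfolding mem_acl_iff by (intro exI[of _ "\<lambda>v. v 0 = b"]) simp
qed

text \<open>Replace the parameter \<open>c\<close> by a variable \<open>a\<close> ranging over the finitely many solutions of an
  algebraic formula for \<open>c\<close>, keeping only those \<open>a\<close> for which the formula for \<open>b\<close> has at most as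
  many solutions as it has at \<open>c\<close>.\<close>

lemma acl_trans_insert:
  assumes b: "b \<in> acl I (C \<union> {c})" and c: "c \<in> acl I C"
  shows "b \<in> acl I C"
proof -
  obtain P where dP: "definable_pred I (C \<union> {c}) {0} P" and fP: "finite {e. P (\<lambda>_. e)}" and Pb: "P (\<lambda>_. b)"
    using b unfolding mem_acl_iff by blast
  obtain R where dR: "definable_pred I C {0} R" and fR: "finite {e. R (\<lambda>_. e)}" and Rc: "R (\<lambda>_. c)"
    using c unfolding mem_acl_iff by blast
  obtain Q where dQ: "definable_pred I C (insert 1 {0}) Q" and PQ: "\<forall>v. P v = Q (v(1 := c))"
    using definable_pred_abstract_param[of "{0}" 1 I C c P] dP by auto
  define N where "N = card {e. P (\<lambda>_. e)}"
  have f01: "finite (insert (1::nat) {0})" by simp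
  have dB: "definable_pred I C (insert 1 {0}) (\<lambda>v. finite {e. Q (v(0 := e))} \<and> card {e. Q (v(0 := e))} \<le> N)"
    by (rule definable_pred_card_le[OF f01 _ dQ]) simp
  have dR': "definable_pred I C (insert 1 {0}) (\<lambda>v. R (v \<circ> (\<lambda>_. 1)))"
    by (rule definable_pred_subst[OF _ f01 _ dR]) auto
  define T0 where "T0 = (\<lambda>v. R (v \<circ> (\<lambda>_. 1)) \<and> (Q v \<and> (finite {e. Q (v(0 := e))} \<and> card {e. Q (v(0 := e))} \<le> N)))"
  have dT0: "definable_pred I C (insert 1 {0}) T0" unfolding T0_def
    by (rule definable_pred_conj[OF f01 dR' definable_pred_conj[OF f01 dQ dB]])
  have dT: "definable_pred I C (insert 1 {0} - {1}) (\<lambda>v. \<exists>a. T0 (v(1 := a)))"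
    by (rule definable_pred_ex[OF _ dT0]) simp
  have e01: "insert (1::nat) {0} - {1} = {0}" by auto
  have dT': "definable_pred I C {0} (\<lambda>v. \<exists>a. T0 (v(1 := a)))" using dT unfolding e01 .
  define F where "F = (\<lambda>a. {e'. Q ((\<lambda>_. e')(1 := a))})"
  have QF: "Q (((\<lambda>_. e)(1 := a))(0 := e')) = Q ((\<lambda>_. e')(1 := a))" for e e' a
    by (rule definable_pred_cong[OF dQ]) auto
  have Pc: "P (\<lambda>_. e) = Q ((\<lambda>_. e)(1 := c))" for e using PQ by simp
  have "T0 ((\<lambda>_. b)(1 := c))"
  proof -
    have "((\<lambda>_. b)(1 := c)) \<circ> (\<lambda>_. 1) = (\<lambda>_. c)" by (simp add: fun_eq_iff)
    then have r: "R (((\<lambda>_. b)(1 := c)) \<circ> (\<lambda>_. 1))" using Rc by simp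
    have q: "Q ((\<lambda>_. b)(1 := c))" using Pb Pc by simp
    have "{e. Q (((\<lambda>_. b)(1 := c))(0 := e))} = {e. P (\<lambda>_. e)}" using QF Pc by simp
    then show ?thesis unfolding T0_def N_def using r q fP by simp
  qed
  then have Tb: "\<exists>a. T0 ((\<lambda>_. b)(1 := a))" by blast
  have sub: "{e. \<exists>a. T0 ((\<lambda>_. e)(1 := a))} \<subseteq> (\<Union>a\<in>{a. R (\<lambda>_. a) \<and> finite (F a)}. F a)"
  proof
    fix e assume "e \<in> {e. \<exists>a. T0 ((\<lambda>_. e)(1 := a))}"
    then obtain a where t: "T0 ((\<lambda>_. e)(1 := a))" by blast
    have "((\<lambda>_. e)(1 := a)) \<circ> (\<lambda>_. 1) = (\<lambda>_. a)" by (simp add: fun_eq_iff)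
    then have r: "R (\<lambda>_. a)" using t unfolding T0_def by simp
    have fe: "{e'. Q (((\<lambda>_. e)(1 := a))(0 := e'))} = F a" unfolding F_def using QF by simp
    have fin: "finite (F a)" using t fe unfolding T0_def by simp
    have "e \<in> F a" using t QF[of e a e] unfolding T0_def F_def by simp
    then show "e \<in> (\<Union>a\<in>{a. R (\<lambda>_. a) \<and> finite (F a)}. F a)" using r fin by blast
  qed
  have "finite (\<Union>a\<in>{a. R (\<lambda>_. a) \<and> finite (F a)}. F a)"
    using fR by (intro finite_UN_I) (auto intro: finite_subset[of _ "{e. R (\<lambda>_. e)}"])
  then have "finite {e. \<exists>a. T0 ((\<lambda>_. e)(1 := a))}" using sub finite_subset by blast
  then show ?thesis unfolding mem_acl_iff using dT' Tb by (intro exI[of _ "\<lambda>v. \<exists>a. T0 (v(1 := a))"]) simp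
qed

lemma acl_trans_finite:
  assumes "finite B" "B \<subseteq> acl I C" "b \<in> acl I (C \<union> B)"
  shows "b \<in> acl I C"
  using assms
proof (induction B arbitrary: b rule: finite_induct)
  case empty then show ?case by simp
next
  case (insert c B)
  have "c \<in> acl I (C \<union> B)" using insert.prems(1) acl_mono[of C "C \<union> B"] by blast
  moreover have "b \<in> acl I ((C \<union> B) \<union> {c})" using insert.prems(2) by (simp add: Un_insert_right)
  ultimately have "b \<in> acl I (C \<union> B)" using acl_trans_insert by metis
  then show ?case using insert.IH insert.prems(1) by blast
qed

text \<open>Algebraicity over finitely many parameters is witnessed by a formula that has finitely many
  solutions for every choice of the parameters: bound the number of solutions by the number
  at the actual parameters, which is expressible.\<close>

lemma acl_uniformly_finite_pred:
  assumes "b \<in> acl I (A \<union> c ` {..<k})"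
  shows "\<exists>E. definable_pred I A {..k} E \<and> E (case_nat b c) \<and> (\<forall>d. finite {e. E (case_nat e d)})"
proof -
  obtain P where dP: "definable_pred I (A \<union> c ` {..<k}) {0} P"
    and fin: "finite {e. P (\<lambda>_. e)}" and Pb: "P (\<lambda>_. b)"
    using assms unfolding mem_acl_iff by blast
  obtain Q where dQ: "definable_pred I A {..k} Q"
    and PQ: "\<forall>v. P v = Q (\<lambda>i. if 0 < i \<and> i \<le> k then c (i - 1) else v i)"
    using definable_pred_abstract_params[OF dP] by blast
  define N where "N = card {e. P (\<lambda>_. e)}"
  define E where "E = (\<lambda>v. Q v \<and> (finite {e. Q (v(0 := e))} \<and> card {e. Q (v(0 := e))} \<le> N))"
  have dE: "definable_pred I A {..k} E"
    unfolding E_def by (rule definable_pred_conj[OF _ dQ definable_pred_card_le[OF _ _ dQ]]) simp_all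
  have "Q (case_nat e c) = P (\<lambda>_. e)" for e
  proof -
    have "Q (case_nat e c) = Q (\<lambda>i. if 0 < i \<and> i \<le> k then c (i - 1) else (\<lambda>_. e) i)"
      by (rule definable_pred_cong[OF dQ]) (auto split: nat.split)
    then show ?thesis using PQ by simp
  qed
  moreover have "(case_nat b c)(0 := e) = case_nat e c" for e
    by (auto simp: fun_eq_iff split: nat.split)
  ultimately have "E (case_nat b c)"
    unfolding E_def N_def using Pb fin by simp
  moreover have "finite {e. E (case_nat e d)}" for d
  proof (cases "\<exists>e. E (case_nat e d)")
    case True
    then obtain e0 where "E (case_nat e0 d)" by blast
    moreover have "(case_nat e0 d)(0 := e) = case_nat e d" for e
      by (auto simp: fun_eq_iff split: nat.split)
    ultimately have "finite {e. Q (case_nat e d)}" unfolding E_def by simp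
    then show ?thesis by (rule rev_finite_subset) (auto simp: E_def)
  qed simp
  ultimately show ?thesis using dE by blast
qed

lemma acl_uniformly_finite_preds:
  assumes "\<forall>i<n. x i \<in> acl I (A \<union> c ` {..<k})"
  obtains E where "\<forall>i<n. definable_pred I A {..k} (E i) \<and> E i (case_nat (x i) c) \<and>
    (\<forall>d. finite {e. E i (case_nat e d)})"
proof -
  have "\<forall>i\<in>{..<n}. \<exists>E. definable_pred I A {..k} E \<and> E (case_nat (x i) c) \<and>
                         (\<forall>d. finite {e. E (case_nat e d)})"
  proof
    fix i assume "i \<in> {..<n}"
    then show "\<exists>E. definable_pred I A {..k} E \<and> E (case_nat (x i) c) \<and> (\<forall>d. finite {e. E (case_nat e d)})"
      using acl_uniformly_finite_pred[of "x i" I A c k] assms by simp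
  qed
  from bchoice[OF this] obtain E where "\<forall>i\<in>{..<n}. definable_pred I A {..k} (E i) \<and>
      E i (case_nat (x i) c) \<and> (\<forall>d. finite {e. E i (case_nat e d)})"
    by blast
  then show ?thesis using that[of E] by simp
qed

section \<open>Tuples\<close>

lemma Rn_iff: "u \<in> Rn n \<longleftrightarrow> (\<forall>i. n \<le> i \<longrightarrow> u i = undefined)"
  unfolding Rn_def PiE_iff extensional_def by auto

lemma Rn_0: "Rn 0 = {\<lambda>_. undefined}"
  by (rule set_eqI) (simp add: Rn_iff fun_eq_iff)

lemma join_Rn: "join n m u v \<in> Rn (n + m)"
  unfolding Rn_iff join_def by auto

lemma join_lo: "i < n \<Longrightarrow> join n m u v i = u i"
  unfolding join_def by simp

lemma join_hi: "t < m \<Longrightarrow> join n m u v (n + t) = v t"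
  unfolding join_def by simp

lemma join_eqD:
  assumes "join n m u v = join n m u' v'"
  shows "\<forall>i<n. u i = u' i" "\<forall>t<m. v t = v' t"
  using fun_cong[OF assms] by (metis join_lo, metis join_hi)

lemma join_inj:
  assumes "u \<in> Rn n" "v \<in> Rn m" "u' \<in> Rn n" "v' \<in> Rn m" "join n m u v = join n m u' v'"
  shows "u = u' \<and> v = v'"
  using join_eqD[OF assms(5)] assms(1-4) unfolding Rn_iff by (metis not_le ext)

definition restr :: "nat \<Rightarrow> (nat \<Rightarrow> 'a) \<Rightarrow> (nat \<Rightarrow> 'a)" where
  "restr n u = (\<lambda>i. if i < n then u i else undefined)"

definition shft :: "nat \<Rightarrow> nat \<Rightarrow> (nat \<Rightarrow> 'a) \<Rightarrow> (nat \<Rightarrow> 'a)" where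
  "shft n m z = (\<lambda>t. if t < m then z (n + t) else undefined)"

lemma restr_Rn: "restr n u \<in> Rn n"
  unfolding Rn_iff restr_def by simp

lemma shft_Rn: "shft n m u \<in> Rn m"
  unfolding Rn_iff shft_def by simp

lemma join_split: "z \<in> Rn (n + m) \<Longrightarrow> z = join n m (restr n z) (shft n m z)"
  unfolding Rn_iff join_def restr_def shft_def by (auto simp: fun_eq_iff)

lemma tprod_Rn: "tprod n m (Rn n) (Rn m) = Rn (n + m)"
  unfolding tprod_def using join_Rn join_split restr_Rn shft_Rn by blast

lemma graph_subset_tprod: "(\<And>u. g u \<in> Rn m) \<Longrightarrow> graph n m X g \<subseteq> tprod n m X (Rn m)"
  unfolding graph_def tprod_def by blast

lemma graph_subset_graphD:
  assumes "graph n m U f \<subseteq> graph n m X g" "X \<subseteq> Rn n" "u \<in> U" "u \<in> Rn n"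
    and "f u \<in> Rn m" "\<And>u. g u \<in> Rn m"
  shows "f u = g u"
proof -
  have "join n m u (f u) \<in> graph n m X g" using assms(1,3) unfolding graph_def by blast
  then obtain u' where "u' \<in> X" "join n m u (f u) = join n m u' (g u')" unfolding graph_def by blast
  then show ?thesis using join_inj[of u n "f u" m u' "g u'"] assms(2,4-6) by auto
qed

lemma finite_fibre_subset_graph:
  assumes "Z \<subseteq> graph n m X g" "X \<subseteq> Rn n" "\<And>u. g u \<in> Rn m"
  shows "finite {v \<in> Rn m. join n m u v \<in> Z}"
proof (rule finite_subset)
  show "{v \<in> Rn m. join n m u v \<in> Z} \<subseteq> {g (restr n u)}"
  proof
    fix v assume v: "v \<in> {v \<in> Rn m. join n m u v \<in> Z}"
    then obtain u' where u': "u' \<in> X" "join n m u v = join n m u' (g u')"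
      using assms(1) unfolding graph_def by blast
    have "u' \<in> Rn n" "v \<in> Rn m" "g u' \<in> Rn m" using u'(1) assms(2,3) v by auto
    then have "u' i = restr n u i" "v i = g u' i" for i
      using join_eqD[OF u'(2)] unfolding Rn_iff restr_def by (cases "i < n"; cases "i < m"; simp)+
    then have "u' = restr n u" "v = g u'" by (simp_all add: fun_eq_iff)
    then show "v \<in> {g (restr n u)}" by simp
  qed
qed simp

section \<open>Definable sets and dimension\<close>

lemma definable_over_iff_pred: "definable_over I n A X \<longleftrightarrow> X \<subseteq> Rn n \<and> (\<exists>P. definable_pred I A {..<n} P \<and> X = {x \<in> Rn n. P x})"
proof
  assume "definable_over I n A X"
  then obtain \<phi> p where X: "X \<subseteq> Rn n" and p: "\<forall>i \<in> fv \<phi>. n \<le> i \<longrightarrow> p i \<in> A"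
    and Xe: "X = {x \<in> Rn n. sat I (\<lambda>i. if i < n then x i else p i) \<phi>}"
    unfolding definable_over_def by blast
  define P where "P = (\<lambda>x. sat I (\<lambda>i. if i < n then x i else p i) \<phi>)"
  have "definable_pred I A {..<n} P" unfolding definable_pred_iff_fm P_def
    by (rule exI[of _ \<phi>], rule exI[of _ p]) (use p in auto)
  then show "X \<subseteq> Rn n \<and> (\<exists>P. definable_pred I A {..<n} P \<and> X = {x \<in> Rn n. P x})" using X Xe unfolding P_def by blast
next
  assume "X \<subseteq> Rn n \<and> (\<exists>P. definable_pred I A {..<n} P \<and> X = {x \<in> Rn n. P x})"
  then obtain P where X: "X \<subseteq> Rn n" and d: "definable_pred I A {..<n} P" and Xe: "X = {x \<in> Rn n. P x}" by blast
  obtain \<phi> p where p: "\<forall>i\<in>fv \<phi>. i \<notin> {..<n} \<longrightarrow> p i \<in> A"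
    and P: "\<forall>v. P v = sat I (\<lambda>i. if i \<in> {..<n} then v i else p i) \<phi>"
    using d unfolding definable_pred_iff_fm by blast
  have "X = {x \<in> Rn n. sat I (\<lambda>i. if i < n then x i else p i) \<phi>}" using Xe P by simp
  moreover have "\<forall>i \<in> fv \<phi>. n \<le> i \<longrightarrow> p i \<in> A" using p by auto
  ultimately show "definable_over I n A X" unfolding definable_over_def using X by blast
qed

lemma definable_over_finite: "definable_over I n A X \<Longrightarrow> \<exists>A0. finite A0 \<and> A0 \<subseteq> A \<and> definable_over I n A0 X"
  unfolding definable_over_iff_pred using definable_pred_finite_params by metis

lemma definable_over_mono: "definable_over I n A X \<Longrightarrow> A \<subseteq> B \<Longrightarrow> definable_over I n B X"
  unfolding definable_over_iff_pred using definable_pred_mono_params by metis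

lemma definable_over_Diff:
  assumes "definable_over I n A X" "definable_over I n A Y"
  shows "definable_over I n A (X - Y)"
proof -
  obtain P Q where P: "definable_pred I A {..<n} P" "X = {x \<in> Rn n. P x}"
    and Q: "definable_pred I A {..<n} Q" "Y = {x \<in> Rn n. Q x}"
    using assms unfolding definable_over_iff_pred by blast
  have "definable_pred I A {..<n} (\<lambda>v. P v \<and> \<not> Q v)"
    by (rule definable_pred_conj[OF _ P(1) definable_pred_neg[OF Q(1)]]) simp
  moreover have "X - Y = {x \<in> Rn n. P x \<and> \<not> Q x}" using P(2) Q(2) by blast
  ultimately show ?thesis unfolding definable_over_iff_pred by blast
qed

lemma definable_over_Int:
  assumes "definable_over I n A X" "definable_over I n A Y"
  shows "definable_over I n A (X \<inter> Y)"
proof -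
  obtain P Q where P: "definable_pred I A {..<n} P" "X = {x \<in> Rn n. P x}"
    and Q: "definable_pred I A {..<n} Q" "Y = {x \<in> Rn n. Q x}"
    using assms unfolding definable_over_iff_pred by blast
  have "definable_pred I A {..<n} (\<lambda>v. P v \<and> Q v)"
    by (rule definable_pred_conj[OF _ P(1) Q(1)]) simp
  moreover have "X \<inter> Y = {x \<in> Rn n. P x \<and> Q x}" using P(2) Q(2) by blast
  ultimately show ?thesis unfolding definable_over_iff_pred by blast
qed

lemma definable_over_Rn: "definable_over I n A (Rn n)"
  unfolding definable_over_iff_pred using definable_pred_true by (intro conjI exI[of _ "\<lambda>_. True"]) auto

lemma dim_over_witness:
  "\<exists>S\<subseteq>{..<n}. card S = dim_over I n a A \<and> (\<forall>i<n. a i \<in> acl I (A \<union> a ` S))"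
proof -
  have "\<exists>S\<subseteq>{..<n}. card S = n \<and> (\<forall>i<n. a i \<in> acl I (A \<union> a ` S))"
    by (rule exI[of _ "{..<n}"]) (auto intro!: acl_base)
  then show ?thesis unfolding dim_over_def by - (rule LeastI_ex, blast)
qed

lemma dim_over_le_card:
  "S \<subseteq> {..<n} \<Longrightarrow> \<forall>i<n. a i \<in> acl I (A \<union> a ` S) \<Longrightarrow> dim_over I n a A \<le> card S"
  unfolding dim_over_def by (rule Least_le) blast

lemma dim_over_le_arity: "dim_over I n a A \<le> n"
  using dim_over_le_card[of "{..<n}" n a I A] by (auto intro!: acl_base)

lemma dim_over_antimono: "A \<subseteq> B \<Longrightarrow> dim_over I n a B \<le> dim_over I n a A"
proof -
  assume "A \<subseteq> B"
  obtain S where S: "S \<subseteq> {..<n}" "card S = dim_over I n a A" "\<forall>i<n. a i \<in> acl I (A \<union> a ` S)"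
    using dim_over_witness by blast
  have "\<forall>i<n. a i \<in> acl I (B \<union> a ` S)"
    using S(3) acl_mono[of "A \<union> a ` S" "B \<union> a ` S"] \<open>A \<subseteq> B\<close> by blast
  then show ?thesis using dim_over_le_card[OF S(1)] S(2) by metis
qed

lemma dim_over_le_if_acl:
  assumes sub: "y ` {..<m} \<subseteq> x ` {..<n}" and alg: "\<forall>i<n. x i \<in> acl I (A \<union> y ` {..<m})"
  shows "dim_over I n x A \<le> dim_over I m y A"
proof -
  obtain T where T: "T \<subseteq> {..<m}" "card T = dim_over I m y A" "\<forall>t<m. y t \<in> acl I (A \<union> y ` T)"
    using dim_over_witness by blast
  obtain T' where T': "T' \<subseteq> {..<n}" "inj_on x T'" "y ` T = x ` T'"
    using subset_image_inj[of "y ` T" x "{..<n}"] sub T(1) by (metis image_mono order_trans)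
  have "x i \<in> acl I (A \<union> x ` T')" if i: "i < n" for i
  proof -
    have "x i \<in> acl I ((A \<union> y ` T) \<union> y ` {..<m})"
      using alg i acl_mono[of "A \<union> y ` {..<m}" "(A \<union> y ` T) \<union> y ` {..<m}"] by blast
    moreover have "y ` {..<m} \<subseteq> acl I (A \<union> y ` T)" using T(3) by blast
    ultimately show ?thesis using acl_trans_finite[of "y ` {..<m}"] T'(3) by simp
  qed
  then have "dim_over I n x A \<le> card T'" using dim_over_le_card[OF T'(1)] by blast
  also have "\<dots> = card (y ` T)" using T'(2,3) card_image by metis
  also have "\<dots> \<le> card T" using T(1) by (intro card_image_le) (simp add: finite_subset)
  finally show ?thesis using T(2) by simp
qed

lemma finite_dim_over_values:
  "finite {int (dim_over I n a A) | a A. countable A \<and> definable_over I n A X \<and> a \<in> X}"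
  by (rule finite_subset[of _ "{0..int n}"]) (use dim_over_le_arity in auto)

text \<open>Unlike in the definition of \<open>dim\<close>, the parameter set need not be countable: a finite part
  of it already defines \<open>X\<close>.\<close>

lemma dim_over_le_dim:
  assumes "definable_over I n A X" "a \<in> X"
  shows "int (dim_over I n a A) \<le> dim I n X"
proof -
  obtain A0 where A0: "finite A0" "A0 \<subseteq> A" "definable_over I n A0 X"
    using definable_over_finite[OF assms(1)] by blast
  have "int (dim_over I n a A0) \<le> dim I n X"
    unfolding dim_def using assms(2) A0 countable_finite
    by (auto intro!: Max_ge[OF finite_dim_over_values])
  then show ?thesis using dim_over_antimono[OF A0(2), of I n a] by linarith
qed

lemma dim_le_if_dim_over_le:
  assumes "definable_over I n A X" "X \<noteq> {}"
    and "\<And>a A'. countable A' \<Longrightarrow> definable_over I n A' X \<Longrightarrow> a \<in> X \<Longrightarrow> dim_over I n a A' \<le> k"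
  shows "dim I n X \<le> int k"
proof -
  define D where "D = {int (dim_over I n a A) | a A. countable A \<and> definable_over I n A X \<and> a \<in> X}"
  obtain A0 where A0: "finite A0" "definable_over I n A0 X"
    using definable_over_finite[OF assms(1)] by blast
  obtain a where "a \<in> X" using assms(2) by blast
  then have "D \<noteq> {}" unfolding D_def using A0 countable_finite by blast
  moreover have "\<forall>d\<in>D. d \<le> int k" unfolding D_def using assms(3) by auto
  moreover have "dim I n X = Max D" using assms(2) unfolding dim_def D_def by simp
  ultimately show ?thesis using Max_le_iff[OF finite_dim_over_values[of I n X, folded D_def]] by simp
qed

lemma dim_le_arity:
  assumes "definable_over I n A X"
  shows "dim I n X \<le> int n"
proof (cases "X = {}")
  case False
  then show ?thesis by (rule dim_le_if_dim_over_le[OF assms]) (rule dim_over_le_arity)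
qed (simp add: dim_def)

lemma generic_mem_if_dim_Diff_less:
  assumes "definable_over I n A X" "definable_over I n A X'" "dim I n (X - X') < dim I n X"
    and "generic I n X x A"
  shows "x \<in> X'"
proof (rule ccontr)
  assume "x \<notin> X'"
  then have "int (dim_over I n x A) \<le> dim I n (X - X')"
    using assms(4) by (intro dim_over_le_dim[OF definable_over_Diff[OF assms(1,2)]]) (simp add: generic_def)
  then show False using assms(3,4) unfolding generic_def by linarith
qed

lemma acl_of_finite_fibre:
  assumes "definable_over I (n + k) A Z" "z \<in> Z" "i < n"
    and "finite {u \<in> Rn n. join n k u (shft n k z) \<in> Z}"
  shows "z i \<in> acl I (A \<union> z ` {n..<n + k})"
proof -
  obtain PZ where dPZ: "definable_pred I A {..<n + k} PZ" and Ze: "Z = {z \<in> Rn (n + k). PZ z}"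
    using assms(1) unfolding definable_over_iff_pred by blast
  define B where "B = A \<union> z ` {n..<n + k}"
  define Q where "Q = (\<lambda>u. PZ (\<lambda>j. if j \<in> {n..<n + k} then z j else u j))"
  have "definable_pred I B ({..<n + k} - {n..<n + k}) Q"
    unfolding Q_def
    by (rule definable_pred_inst[OF _ _ _ definable_pred_mono_params[OF dPZ]]) (auto simp: B_def)
  moreover have "{..<n + k} - {n..<n + k} = {..<n}" by auto
  ultimately have "definable_pred I B {..<n} Q" by simp
  then have dR: "definable_pred I B {0} (\<lambda>v. \<exists>u. Q u \<and> u i = v 0)"
    by (rule definable_pred_ex_coordinate[OF _ assms(3)])
  have "Q z" using assms(2) Ze unfolding Q_def by simp
  then have Rz: "\<exists>u. Q u \<and> u i = z i" by blast
  have "{e. \<exists>u. Q u \<and> u i = e} \<subseteq> (\<lambda>u. u i) ` {u \<in> Rn n. join n k u (shft n k z) \<in> Z}"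
  proof
    fix e assume "e \<in> {e. \<exists>u. Q u \<and> u i = e}"
    then obtain u where u: "Q u" "u i = e" by blast
    have "PZ (join n k (restr n u) (shft n k z)) = Q u"
      unfolding Q_def by (rule definable_pred_cong[OF dPZ]) (auto simp: join_def restr_def shft_def)
    then have "PZ (join n k (restr n u) (shft n k z))" using u(1) by simp
    then have "join n k (restr n u) (shft n k z) \<in> Z" using Ze join_Rn by blast
    moreover have "restr n u i = e" using u(2) assms(3) by (simp add: restr_def)
    ultimately show "e \<in> (\<lambda>u. u i) ` {u \<in> Rn n. join n k u (shft n k z) \<in> Z}"
      using restr_Rn by blast
  qed
  then have "finite {e. \<exists>u. Q u \<and> u i = e}" using assms(4) finite_surj by blast
  then show ?thesis
    unfolding mem_acl_iff B_def[symmetric] using dR Rz by (intro exI[of _ "\<lambda>v. \<exists>u. Q u \<and> u i = v 0"]) simp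
qed

lemma dim_le_of_finite_fibres:
  assumes "definable_over I (n + k) A Z" "Z \<noteq> {}"
    and "\<And>v. finite {u \<in> Rn n. join n k u v \<in> Z}"
  shows "dim I (n + k) Z \<le> int k"
proof (rule dim_le_if_dim_over_le[OF assms(1,2)])
  fix z A' assume A': "definable_over I (n + k) A' Z" "z \<in> Z"
  have "z i \<in> acl I (A' \<union> z ` {n..<n + k})" if "i < n + k" for i
  proof (cases "i < n")
    case True
    then show ?thesis by (rule acl_of_finite_fibre[OF A' _ assms(3)])
  next
    case False
    then show ?thesis using that by (intro acl_base) auto
  qed
  then have "dim_over I (n + k) z A' \<le> card {n..<n + k}"
    by (intro dim_over_le_card) auto
  then show "dim_over I (n + k) z A' \<le> k" by simp
qed

section \<open>Lores\<close>

lemma lore_definable: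
  assumes "lore I \<tau> L" "L n X"
  shows "definable I n X"
proof -
  have "\<forall>n X. L n X \<longrightarrow> definable I n X"
    using assms(1) unfolding lore_def by (elim conjE) assumption
  then show ?thesis using assms(2) by blast
qed

lemma lore_Rn_1: "lore I \<tau> L \<Longrightarrow> L 1 (Rn 1)"
  unfolding lore_def by (elim conjE) assumption

lemma lore_diagonal_2: "lore I \<tau> L \<Longrightarrow> L 2 {x \<in> Rn 2. x 0 = x 1}"
  unfolding lore_def by (elim conjE) assumption

lemma lore_tprod:
  assumes "lore I \<tau> L" "L n X" "L m Y"
  shows "L (n + m) (tprod n m X Y)"
proof -
  have "\<forall>n m X Y. L n X \<and> L m Y \<longrightarrow> L (n + m) (tprod n m X Y)"
    using assms(1) unfolding lore_def by (elim conjE) assumption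
  then show ?thesis using assms(2,3) by blast
qed

lemma lore_Int:
  assumes "lore I \<tau> L" "L n X" "L n Y"
  shows "L n (X \<inter> Y)"
proof -
  have "\<forall>n X Y. L n X \<and> L n Y \<longrightarrow> L n (X \<inter> Y)"
    using assms(1) unfolding lore_def by (elim conjE) assumption
  then show ?thesis using assms(2,3) by blast
qed

lemma lore_permutes:
  assumes "lore I \<tau> L" "L n X" "\<sigma> permutes {..<n}"
  shows "L n ((\<lambda>x. x \<circ> \<sigma>) ` X)"
proof -
  have "\<forall>n X \<sigma>. L n X \<and> \<sigma> permutes {..<n} \<longrightarrow> L n ((\<lambda>x. x \<circ> \<sigma>) ` X)"
    using assms(1) unfolding lore_def by (elim conjE) assumption
  then show ?thesis using assms(2,3) by blast
qed

lemma lore_openin: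
  assumes "lore I \<tau> L" "L n X" "definable I n U" "openin (subtopology (Tn \<tau> n) X) U"
  shows "L n U"
proof -
  have "\<forall>n X U. L n X \<and> definable I n U \<and> openin (subtopology (Tn \<tau> n) X) U \<longrightarrow> L n U"
    using assms(1) unfolding lore_def by (elim conjE) assumption
  then show ?thesis using assms(2-4) by blast
qed

lemma lore_open_part:
  assumes "lore I \<tau> L" "definable_over I n A X" "X \<noteq> {}"
  obtains X' where "openin (subtopology (Tn \<tau> n) X) X'" "definable_over I n A X'" "L n X'"
    "dim I n (X - X') < dim I n X"
proof -
  have "\<forall>n A X. definable_over I n A X \<and> X \<noteq> {} \<longrightarrow>
          (\<exists>X'. openin (subtopology (Tn \<tau> n) X) X' \<and> definable_over I n A X' \<and> L n X' \<and>
                dim I n (X - X') < dim I n X)"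
    using assms(1) unfolding lore_def by (elim conjE) assumption
  then show ?thesis using assms(2,3) that by blast
qed

text \<open>Axiom (iv) applied to the one-point set \<open>Rn 0\<close> shows that it is loric.\<close>

lemma lore_Rn:
  fixes L :: "nat \<Rightarrow> (nat \<Rightarrow> 'a) set \<Rightarrow> bool"
  assumes lo: "lore I \<tau> L"
  shows "L m (Rn m)"
proof (induction m)
  case 0
  obtain X' where X': "openin (subtopology (Tn \<tau> 0) (Rn 0)) X'" "L 0 X'" "dim I 0 (Rn 0 - X') < dim I 0 (Rn 0)"
    using lore_open_part[OF lo definable_over_Rn, of 0 "{}"] Rn_0 by auto
  have "X' \<subseteq> Rn 0" using openin_subset[OF X'(1)] by simp
  moreover have "X' \<noteq> {}" using X'(3) by auto
  ultimately have "X' = Rn 0" unfolding Rn_0 by blast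
  then show ?case using X'(2) by simp
next
  case (Suc m)
  then have "L (m + 1) (tprod m 1 (Rn m) (Rn 1))" using lore_tprod[OF lo _ lore_Rn_1[OF lo]] by blast
  then show ?case by (simp only: tprod_Rn Suc_eq_plus1)
qed

lemma lore_eq_01:
  fixes L :: "nat \<Rightarrow> (nat \<Rightarrow> 'a) set \<Rightarrow> bool"
  assumes lo: "lore I \<tau> L" and N: "2 \<le> N"
  shows "L N {z \<in> Rn N. z 0 = z 1}"
proof -
  define D where "D = {z :: nat \<Rightarrow> 'a. z \<in> Rn 2 \<and> z 0 = z 1}"
  have "L (2 + (N - 2)) (tprod 2 (N - 2) D (Rn (N - 2)))"
    using lore_tprod[OF lo lore_diagonal_2[OF lo] lore_Rn[OF lo]] unfolding D_def by simp
  moreover have "tprod 2 (N - 2) D (Rn (N - 2)) = {z \<in> Rn N. z 0 = z 1}"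
  proof
    have "join 2 (N - 2) u v \<in> Rn N" for u v :: "nat \<Rightarrow> 'a"
      using N join_Rn[of 2 "N - 2" u v] by (metis le_add_diff_inverse)
    then show "tprod 2 (N - 2) D (Rn (N - 2)) \<subseteq> {z \<in> Rn N. z 0 = z 1}"
      unfolding tprod_def D_def by (auto simp: join_lo)
    show "{z \<in> Rn N. z 0 = z 1} \<subseteq> tprod 2 (N - 2) D (Rn (N - 2))"
    proof
      fix z :: "nat \<Rightarrow> 'a" assume z: "z \<in> {z \<in> Rn N. z 0 = z 1}"
      then have "z \<in> Rn (2 + (N - 2))" by (subst le_add_diff_inverse[OF N]) simp
      then have "z = join 2 (N - 2) (restr 2 z) (shft 2 (N - 2) z)" by (rule join_split)
      moreover have "restr 2 z \<in> D" using z restr_Rn unfolding D_def restr_def by simp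
      ultimately show "z \<in> tprod 2 (N - 2) D (Rn (N - 2))" unfolding tprod_def using shft_Rn by blast
    qed
  qed
  ultimately show ?thesis by (simp only: le_add_diff_inverse[OF N])
qed

lemma exists_permutes_to_01:
  fixes a b N :: nat
  assumes "a < N" "b < N" "a \<noteq> b"
  shows "\<exists>\<sigma>. \<sigma> permutes {..<N} \<and> \<sigma> a = 0 \<and> \<sigma> b = 1"
proof -
  define b' where "b' = Transposition.transpose a 0 b"
  have "b' \<noteq> 0" "b' < N" using assms unfolding b'_def by (auto simp: Transposition.transpose_def)
  then have "Transposition.transpose b' 1 \<circ> Transposition.transpose a 0 permutes {..<N}"
    using assms by (intro permutes_compose permutes_swap_id) auto
  moreover have "(Transposition.transpose b' 1 \<circ> Transposition.transpose a 0) a = 0"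
    using \<open>b' \<noteq> 0\<close> by (simp add: Transposition.transpose_def)
  moreover have "(Transposition.transpose b' 1 \<circ> Transposition.transpose a 0) b = 1"
    unfolding b'_def by (simp add: Transposition.transpose_def)
  ultimately show ?thesis by blast
qed

lemma lore_eq_coords:
  fixes L :: "nat \<Rightarrow> (nat \<Rightarrow> 'a) set \<Rightarrow> bool"
  assumes lo: "lore I \<tau> L" and ab: "a < N" "b < N" "a \<noteq> b"
  shows "L N {z \<in> Rn N. z a = z b}"
proof -
  obtain \<sigma> where \<sigma>: "\<sigma> permutes {..<N}" "\<sigma> a = 0" "\<sigma> b = 1"
    using exists_permutes_to_01[OF ab] by blast
  have "L N ((\<lambda>x. x \<circ> \<sigma>) ` {z \<in> Rn N. z 0 = z 1})"
    using lore_permutes[OF lo lore_eq_01[OF lo] \<sigma>(1)] ab by linarith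
  moreover have "(\<lambda>x :: nat \<Rightarrow> 'a. x \<circ> \<sigma>) ` {z \<in> Rn N. z 0 = z 1} = {z \<in> Rn N. z a = z b}"
  proof -
    have Rn_comp: "x \<circ> \<rho> \<in> Rn N" if "x \<in> Rn N" "\<rho> permutes {..<N}" for x :: "nat \<Rightarrow> 'a" and \<rho>
      using that permutes_not_in unfolding Rn_iff by fastforce
    have "w \<in> (\<lambda>x. x \<circ> \<sigma>) ` {z \<in> Rn N. z 0 = z 1}" if w: "w \<in> Rn N" "w a = w b" for w :: "nat \<Rightarrow> 'a"
    proof
      show "w = w \<circ> inv \<sigma> \<circ> \<sigma>" using permutes_inverses(2)[OF \<sigma>(1)] by (simp add: fun_eq_iff)
      have "inv \<sigma> 0 = a" "inv \<sigma> 1 = b" using \<sigma> permutes_inverses(2)[OF \<sigma>(1)] by metis+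
      then show "w \<circ> inv \<sigma> \<in> {z \<in> Rn N. z 0 = z 1}" using w Rn_comp permutes_inv[OF \<sigma>(1)] by simp
    qed
    then show ?thesis using Rn_comp[OF _ \<sigma>(1)] \<sigma>(2,3) by auto
  qed
  ultimately show ?thesis by simp
qed

lemma lore_Int_eq_coords:
  assumes lo: "lore I \<tau> L" and "L N B" "finite K"
    and "\<And>t. t \<in> K \<Longrightarrow> a t < N \<and> b t < N \<and> a t \<noteq> b t"
  shows "L N (B \<inter> {z \<in> Rn N. \<forall>t\<in>K. z (a t) = z (b t)})"
  using assms(3,4)
proof (induction K rule: finite_induct)
  case empty
  have "B \<subseteq> Rn N" using lore_definable[OF lo assms(2)] unfolding definable_def definable_over_def by blast
  then show ?case using assms(2) by (simp add: Int_absorb2)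
next
  case (insert t K)
  have "L N (B \<inter> {z \<in> Rn N. \<forall>t\<in>K. z (a t) = z (b t)})"
    by (rule insert.IH) (use insert.prems in simp)
  moreover have "L N {z \<in> Rn N. z (a t) = z (b t)}"
    using insert.prems lore_eq_coords[OF lo] by simp
  ultimately have "L N (B \<inter> {z \<in> Rn N. \<forall>t\<in>K. z (a t) = z (b t)} \<inter> {z \<in> Rn N. z (a t) = z (b t)})"
    by (rule lore_Int[OF lo])
  moreover have "B \<inter> {z \<in> Rn N. \<forall>t\<in>K. z (a t) = z (b t)} \<inter> {z \<in> Rn N. z (a t) = z (b t)} =
      B \<inter> {z \<in> Rn N. \<forall>t\<in>insert t K. z (a t) = z (b t)}" by blast
  ultimately show ?case by simp
qed

lemma graph_coordinate_projection:
  assumes "\<forall>t<k. s t < n"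
  shows "graph n k U (\<lambda>u. restr k (u \<circ> s)) =
    tprod n k U (Rn k) \<inter> {z \<in> Rn (n + k). \<forall>t\<in>{..<k}. z (s t) = z (n + t)}"
proof
  show "graph n k U (\<lambda>u. restr k (u \<circ> s)) \<subseteq>
      tprod n k U (Rn k) \<inter> {z \<in> Rn (n + k). \<forall>t\<in>{..<k}. z (s t) = z (n + t)}"
  proof
    fix z assume "z \<in> graph n k U (\<lambda>u. restr k (u \<circ> s))"
    then obtain u where u: "u \<in> U" "z = join n k u (restr k (u \<circ> s))" unfolding graph_def by blast
    then have "z \<in> tprod n k U (Rn k)" unfolding tprod_def using restr_Rn by blast
    moreover have "\<forall>t\<in>{..<k}. z (s t) = z (n + t)"
      using u(2) assms by (simp add: join_lo join_hi restr_def)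
    ultimately show "z \<in> tprod n k U (Rn k) \<inter> {z \<in> Rn (n + k). \<forall>t\<in>{..<k}. z (s t) = z (n + t)}"
      using u(2) join_Rn by blast
  qed
  show "tprod n k U (Rn k) \<inter> {z \<in> Rn (n + k). \<forall>t\<in>{..<k}. z (s t) = z (n + t)} \<subseteq>
      graph n k U (\<lambda>u. restr k (u \<circ> s))"
  proof
    fix z assume z: "z \<in> tprod n k U (Rn k) \<inter> {z \<in> Rn (n + k). \<forall>t\<in>{..<k}. z (s t) = z (n + t)}"
    then obtain u v where uv: "u \<in> U" "v \<in> Rn k" "z = join n k u v" unfolding tprod_def by blast
    have "v t = restr k (u \<circ> s) t" for t
      using z uv assms unfolding Rn_iff restr_def by (cases "t < k") (auto simp: join_lo join_hi)
    then have "v = restr k (u \<circ> s)" by (rule ext)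
    then show "z \<in> graph n k U (\<lambda>u. restr k (u \<circ> s))" unfolding graph_def using uv by blast
  qed
qed

lemma lore_graph_coordinate_projection:
  assumes "lore I \<tau> L" "L n U" "\<forall>t<k. s t < n"
  shows "L (n + k) (graph n k U (\<lambda>u. restr k (u \<circ> s)))"
  unfolding graph_coordinate_projection[OF assms(3)]
  by (rule lore_Int_eq_coords[OF assms(1) lore_tprod[OF assms(1,2) lore_Rn[OF assms(1)]]])
    (use assms(3) in auto)

section \<open>Topology\<close>

lemma Tn_topspace: "topspace \<tau> = UNIV \<Longrightarrow> topspace (Tn \<tau> n) = Rn n"
  unfolding Tn_def Rn_def by simp

lemma homeomorphic_map_restrict_openin:
  assumes hom: "homeomorphic_map (subtopology X U) (subtopology Y V) f"
    and W: "openin (subtopology X U) W"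
  shows "homeomorphic_map (subtopology X W) (subtopology Y (f ` W)) f"
    and "openin (subtopology Y V) (f ` W)"
proof -
  have W_sub: "W \<subseteq> topspace (subtopology X U)" using openin_subset[OF W] .
  then have fW_sub: "f ` W \<subseteq> topspace (subtopology Y V)"
    using homeomorphic_imp_surjective_map[OF hom] by blast
  have "homeomorphic_map (subtopology (subtopology X U) W) (subtopology (subtopology Y V) (f ` W)) f"
    by (rule homeomorphic_map_subtopologies[OF hom]) (use W_sub fW_sub in blast)
  moreover have "U \<inter> W = W" "V \<inter> f ` W = f ` W" using W_sub fW_sub by auto
  ultimately show "homeomorphic_map (subtopology X W) (subtopology Y (f ` W)) f"
    by (simp add: subtopology_subtopology)
  show "openin (subtopology Y V) (f ` W)" using homeomorphic_map_openness[OF hom W_sub] W by blast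
qed

lemma definable_PiE_instances: "definable I n (Pi\<^sub>E {..<n} (\<lambda>i. {c. sat I ((p i)(0 := c)) \<phi>}))"
proof -
  define P where "P = (\<lambda>v::nat \<Rightarrow> _. \<forall>i\<in>{..<n}. sat I ((p i)(0 := v i)) \<phi>)"
  have "definable_pred I UNIV {..<n} P" unfolding P_def
  proof (rule definable_pred_conj_fin, simp, simp)
    fix i assume i: "i \<in> {..<n}"
    have "(\<lambda>j. if j \<in> {0} then v j else p i j) = (p i)(0 := v 0)" for v :: "nat \<Rightarrow> _"
      by (auto simp: fun_eq_iff)
    then have "definable_pred I UNIV {0} (\<lambda>v. sat I ((p i)(0 := v 0)) \<phi>)"
      unfolding definable_pred_iff_fm by (intro exI[of _ \<phi>] exI[of _ "p i"]) simp
    then show "definable_pred I UNIV {..<n} (\<lambda>v. sat I ((p i)(0 := v i)) \<phi>)"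
      using definable_pred_subst[of "{0}" "{..<n}" "\<lambda>_. i"] i by (simp add: comp_def)
  qed
  moreover have "Pi\<^sub>E {..<n} (\<lambda>i. {c. sat I ((p i)(0 := c)) \<phi>}) = {v \<in> Rn n. P v}"
    unfolding P_def Rn_def by (rule set_eqI) (simp add: PiE_iff conj_commute)
  ultimately show ?thesis unfolding definable_def definable_over_iff_pred by auto
qed

lemma t_minimal_definable_open_nbhd:
  assumes tm: "t_minimal I \<tau>" and W: "openin (Tn \<tau> n) W" "x \<in> W"
  obtains B where "x \<in> B" "B \<subseteq> W" "openin (Tn \<tau> n) B" "definable I n B"
proof -
  obtain \<phi> where \<phi>_open: "\<forall>p. openin \<tau> {c. sat I (p(0 := c)) \<phi>}"
    and \<phi>_basis: "\<forall>U a. openin \<tau> U \<and> a \<in> U \<longrightarrow>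
                     (\<exists>p. a \<in> {c. sat I (p(0 := c)) \<phi>} \<and> {c. sat I (p(0 := c)) \<phi>} \<subseteq> U)"
    using tm unfolding t_minimal_def by blast
  obtain U where U: "\<forall>i\<in>{..<n}. openin \<tau> (U i)" "x \<in> Pi\<^sub>E {..<n} U" "Pi\<^sub>E {..<n} U \<subseteq> W"
    using W unfolding Tn_def openin_product_topology_alt by blast
  have "\<forall>i\<in>{..<n}. \<exists>p. x i \<in> {c. sat I (p(0 := c)) \<phi>} \<and> {c. sat I (p(0 := c)) \<phi>} \<subseteq> U i"
    using U(1,2) \<phi>_basis by (blast dest: PiE_mem)
  then obtain p where p: "\<forall>i\<in>{..<n}. x i \<in> {c. sat I ((p i)(0 := c)) \<phi>} \<and>
                                       {c. sat I ((p i)(0 := c)) \<phi>} \<subseteq> U i"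
    by metis
  define B where "B = Pi\<^sub>E {..<n} (\<lambda>i. {c. sat I ((p i)(0 := c)) \<phi>})"
  have "B \<subseteq> Pi\<^sub>E {..<n} U" unfolding B_def using p by (intro PiE_mono) blast
  then have "B \<subseteq> W" using U(3) by blast
  moreover have "x \<in> B" unfolding B_def using p U(2) by (simp add: PiE_iff)
  moreover have "openin (Tn \<tau> n) B" unfolding Tn_def B_def by (subst openin_PiE) (simp_all add: \<phi>_open)
  ultimately show ?thesis using that definable_PiE_instances unfolding B_def by blast
qed

lemma hausdorff_geometric_local_homeomorphism:
  assumes "hausdorff_geometric I \<tau>"
    and "definable_over I n A X" "definable_over I m A Y" "definable_over I (n + m) A Z"
    and "Z \<subseteq> tprod n m X Y" "dim I n X = dim I m Y" "dim I (n + m) Z = dim I n X"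
    and "\<forall>u. finite {v \<in> Rn m. join n m u v \<in> Z}" "\<forall>v. finite {u \<in> Rn n. join n m u v \<in> Z}"
    and "x \<in> Rn n" "y \<in> Rn m" "generic I (n + m) Z (join n m x y) A"
  obtains U V f where "openin (subtopology (Tn \<tau> n) X) U" "x \<in> U"
    "openin (subtopology (Tn \<tau> m) Y) V" "y \<in> V"
    "homeomorphic_map (subtopology (Tn \<tau> n) U) (subtopology (Tn \<tau> m) V) f"
    "Z \<inter> tprod n m U V = graph n m U f"
proof -
  have "\<forall>n m A X Y Z x y.
          definable_over I n A X \<and> definable_over I m A Y \<and> definable_over I (n + m) A Z \<and>
          Z \<subseteq> tprod n m X Y \<and> dim I n X = dim I m Y \<and> dim I (n + m) Z = dim I n X \<and>
          (\<forall>u. finite {v \<in> Rn m. join n m u v \<in> Z}) \<and>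
          (\<forall>v. finite {u \<in> Rn n. join n m u v \<in> Z}) \<and>
          x \<in> Rn n \<and> y \<in> Rn m \<and> generic I (n + m) Z (join n m x y) A \<longrightarrow>
          (\<exists>U V f. openin (subtopology (Tn \<tau> n) X) U \<and> x \<in> U \<and>
                   openin (subtopology (Tn \<tau> m) Y) V \<and> y \<in> V \<and>
                   homeomorphic_map (subtopology (Tn \<tau> n) U) (subtopology (Tn \<tau> m) V) f \<and>
                   Z \<inter> tprod n m U V = graph n m U f)"
    using assms(1) unfolding hausdorff_geometric_def by (elim conjE) assumption
  from this[rule_format, of n A X m Y Z x y] show ?thesis using assms(2-) that by blast
qed

lemma homeomorphic_map_eq_projection:
  assumes "topspace \<tau> = UNIV" "X \<subseteq> Rn n" "openin (subtopology (Tn \<tau> n) X) U"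
    and hom: "homeomorphic_map (subtopology (Tn \<tau> n) U) (subtopology (Tn \<tau> k) V) f"
    and "graph n k U f \<subseteq> graph n k X (\<lambda>u. restr k (u \<circ> s))"
  shows "homeomorphic_map (subtopology (Tn \<tau> n) U) (subtopology (Tn \<tau> k) V) (\<lambda>u. restr k (u \<circ> s))"
proof (rule homeomorphic_map_eq[OF hom])
  fix u assume u: "u \<in> topspace (subtopology (Tn \<tau> n) U)"
  then have "u \<in> U" "u \<in> Rn n" using Tn_topspace[OF assms(1)] by auto
  moreover have "f u \<in> Rn k"
    using continuous_map_image_subset_topspace[OF homeomorphic_imp_continuous_map[OF hom]] u
      Tn_topspace[OF assms(1)] by auto
  ultimately show "f u = restr k (u \<circ> s)"
    using graph_subset_graphD[OF assms(5,2) _ _ _ restr_Rn] by blast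
qed

section \<open>The coordinate projection at a generic point\<close>

text \<open>Variable \<open>0\<close> of \<open>E i\<close> stands for the coordinate \<open>u i\<close>, variables \<open>1, \<dots>, k\<close> for the projection.\<close>

definition algebraic_graph ::
    "nat \<Rightarrow> nat \<Rightarrow> (nat \<Rightarrow> nat) \<Rightarrow> (nat \<Rightarrow> (nat \<Rightarrow> 'a) \<Rightarrow> bool) \<Rightarrow> (nat \<Rightarrow> 'a) set \<Rightarrow> (nat \<Rightarrow> 'a) set" where
  "algebraic_graph n k s E X =
     graph n k {u \<in> X. \<forall>i<n. E i (case_nat (u i) (restr k (u \<circ> s)))} (\<lambda>u. restr k (u \<circ> s))"

lemma mem_algebraic_graph_iff:
  assumes "X \<subseteq> Rn n" "\<forall>t<k. s t < n"
  shows "z \<in> algebraic_graph n k s E X \<longleftrightarrow>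
    z \<in> Rn (n + k) \<and> restr n z \<in> X \<and> (\<forall>t<k. z (n + t) = z (s t)) \<and>
    (\<forall>i<n. E i (case_nat (z i) (shft n k z)))"
proof
  assume "z \<in> algebraic_graph n k s E X"
  then obtain u where u: "u \<in> X" "\<forall>i<n. E i (case_nat (u i) (restr k (u \<circ> s)))"
    and z: "z = join n k u (restr k (u \<circ> s))"
    unfolding algebraic_graph_def graph_def by blast
  have "u \<in> Rn n" using u(1) assms(1) by blast
  then have "restr n z = u" "shft n k z = restr k (u \<circ> s)"
    using z unfolding Rn_iff restr_def shft_def join_def by (auto simp: fun_eq_iff)
  then show "z \<in> Rn (n + k) \<and> restr n z \<in> X \<and> (\<forall>t<k. z (n + t) = z (s t)) \<and>
      (\<forall>i<n. E i (case_nat (z i) (shft n k z)))"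
    using u z assms(2) by (simp add: join_Rn join_lo join_hi restr_def)
next
  assume z: "z \<in> Rn (n + k) \<and> restr n z \<in> X \<and> (\<forall>t<k. z (n + t) = z (s t)) \<and>
      (\<forall>i<n. E i (case_nat (z i) (shft n k z)))"
  have "shft n k z = restr k (restr n z \<circ> s)"
    using z assms(2) by (auto simp: fun_eq_iff shft_def restr_def)
  moreover have "z = join n k (restr n z) (shft n k z)" using z join_split by blast
  ultimately show "z \<in> algebraic_graph n k s E X"
    using z unfolding algebraic_graph_def graph_def by (auto simp: restr_def)
qed

lemma definable_over_algebraic_graph:
  assumes dX: "definable_over I n A X" and s: "\<forall>t<k. s t < n"
    and dE: "\<forall>i<n. definable_pred I A {..k} (E i)"
  shows "definable_over I (n + k) A (algebraic_graph n k s E X)"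
proof -
  obtain PX where dPX: "definable_pred I A {..<n} PX" and X: "X = {u \<in> Rn n. PX u}"
    using dX unfolding definable_over_iff_pred by blast
  then have XR: "X \<subseteq> Rn n" by blast
  define P where "P = (\<lambda>z. PX z \<and> (\<forall>t\<in>{..<k}. z (n + t) = z (s t)) \<and>
                           (\<forall>i\<in>{..<n}. E i (z \<circ> case_nat i ((+) n))))"
  have "definable_pred I A {..<n + k} (\<lambda>z. E i (z \<circ> case_nat i ((+) n)))" if "i < n" for i
    using that dE by (intro definable_pred_subst[of "{..k}"]) (auto split: nat.split)
  moreover have "definable_pred I A {..<n + k} (\<lambda>z. z (n + t) = z (s t))" if "t < k" for t
    using that s by (intro definable_pred_eq) auto
  ultimately have "definable_pred I A {..<n + k} P"
    unfolding P_def using definable_pred_mono_vars[OF _ _ dPX]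
    by (intro definable_pred_conj definable_pred_conj_fin) auto
  moreover have "z \<in> algebraic_graph n k s E X \<longleftrightarrow> z \<in> Rn (n + k) \<and> P z" for z
  proof -
    have "PX (restr n z) = PX z"
      by (rule definable_pred_cong[OF dPX]) (simp add: restr_def)
    moreover have "E i (z \<circ> case_nat i ((+) n)) = E i (case_nat (z i) (shft n k z))" if "i < n" for i
      using that dE by (intro definable_pred_cong[of I A "{..k}"]) (auto simp: shft_def split: nat.split)
    ultimately show ?thesis
      unfolding mem_algebraic_graph_iff[OF XR s] P_def by (auto simp: X restr_Rn)
  qed
  then have "algebraic_graph n k s E X = {z \<in> Rn (n + k). P z}" by blast
  moreover have "algebraic_graph n k s E X \<subseteq> Rn (n + k)"
    unfolding algebraic_graph_def graph_def using join_Rn by blast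
  ultimately show ?thesis unfolding definable_over_iff_pred by blast
qed

lemma finite_fibre_algebraic_graph:
  assumes "X \<subseteq> Rn n" "\<forall>i<n. \<forall>d. finite {e. E i (case_nat e d)}"
  shows "finite {u \<in> Rn n. join n k u v \<in> algebraic_graph n k s E X}"
proof (rule finite_subset)
  show "{u \<in> Rn n. join n k u v \<in> algebraic_graph n k s E X} \<subseteq>
      Pi\<^sub>E {..<n} (\<lambda>i. {e. E i (case_nat e (restr k v))})"
  proof
    fix u assume u: "u \<in> {u \<in> Rn n. join n k u v \<in> algebraic_graph n k s E X}"
    then obtain u' where u': "u' \<in> X" "\<forall>i<n. E i (case_nat (u' i) (restr k (u' \<circ> s)))"
      and eq: "join n k u v = join n k u' (restr k (u' \<circ> s))"
      unfolding algebraic_graph_def graph_def by blast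
    have "u \<in> Rn n" "u' \<in> Rn n" using u u'(1) assms(1) by blast+
    then have "u = u'" using join_eqD(1)[OF eq] unfolding Rn_iff by (metis not_le ext)
    moreover have "restr k v = restr k (u' \<circ> s)"
      using join_eqD(2)[OF eq] by (auto simp: restr_def fun_eq_iff)
    ultimately show "u \<in> Pi\<^sub>E {..<n} (\<lambda>i. {e. E i (case_nat e (restr k v))})"
      using u u' unfolding Rn_def by auto
  qed
  show "finite (Pi\<^sub>E {..<n} (\<lambda>i. {e. E i (case_nat e (restr k v))}))"
    using assms(2) by (intro finite_PiE) auto
qed

lemma exists_algebraic_coordinates:
  obtains s where "\<forall>t<dim_over I n x A. s t < n"
    "\<forall>i<n. x i \<in> acl I (A \<union> restr (dim_over I n x A) (x \<circ> s) ` {..<dim_over I n x A})"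
proof -
  obtain S where S: "S \<subseteq> {..<n}" "card S = dim_over I n x A" "\<forall>i<n. x i \<in> acl I (A \<union> x ` S)"
    using dim_over_witness by blast
  obtain s where "bij_betw s {..<dim_over I n x A} S"
    using ex_bij_betw_nat_finite[of S] S(1,2) finite_subset by (metis atLeast0LessThan finite_lessThan)
  then have sS: "s ` {..<dim_over I n x A} = S" by (simp add: bij_betw_def)
  show ?thesis
  proof (rule that)
    show "\<forall>t<dim_over I n x A. s t < n" using S(1) sS by auto
    have "restr (dim_over I n x A) (x \<circ> s) ` {..<dim_over I n x A} = x ` S"
      unfolding sS[symmetric] by (auto simp: restr_def image_image)
    then show "\<forall>i<n. x i \<in> acl I (A \<union> restr (dim_over I n x A) (x \<circ> s) ` {..<dim_over I n x A})"
      using S(3) by simp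
  qed
qed

lemma dim_Rn_eq:
  assumes "y \<in> Rn m" "y ` {..<m} \<subseteq> x ` {..<n}" "\<forall>i<n. x i \<in> acl I (A \<union> y ` {..<m})"
    and "dim_over I n x A = m"
  shows "dim I m (Rn m) = int m"
proof (rule antisym)
  show "dim I m (Rn m) \<le> int m" by (rule dim_le_arity[OF definable_over_Rn])
  have "dim_over I n x A \<le> dim_over I m y {}"
    using dim_over_le_if_acl[OF assms(2,3)] dim_over_antimono[of "{}" A I m y] by simp
  then show "int m \<le> dim I m (Rn m)"
    using dim_over_le_dim[OF definable_over_Rn[of I m "{}"] assms(1)] assms(4) by linarith
qed

lemma dim_eq_dim_over_join:
  assumes "definable_over I (n + k) A Z" "join n k x y \<in> Z"
    and "\<And>v. finite {u \<in> Rn n. join n k u v \<in> Z}"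
    and "y ` {..<k} \<subseteq> x ` {..<n}" "dim_over I n x A = k"
  shows "dim I (n + k) Z = int k" "dim_over I (n + k) (join n k x y) A = k"
proof -
  have "join n k x y ` {..<n + k} \<subseteq> x ` {..<n}"
    using assms(4) by (auto simp: join_def)
  moreover have "\<forall>i<n. x i \<in> acl I (A \<union> join n k x y ` {..<n + k})"
  proof (intro allI impI acl_base UnI2)
    fix i assume "i < n"
    then show "x i \<in> join n k x y ` {..<n + k}" by (intro rev_image_eqI[of i]) (auto simp: join_lo)
  qed
  ultimately have "k \<le> dim_over I (n + k) (join n k x y) A"
    using dim_over_le_if_acl assms(5) by metis
  moreover have "int (dim_over I (n + k) (join n k x y) A) \<le> dim I (n + k) Z"
    by (rule dim_over_le_dim[OF assms(1,2)])
  moreover have "dim I (n + k) Z \<le> int k"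
    using dim_le_of_finite_fibres[OF assms(1) _ assms(3)] assms(2) by blast
  ultimately show "dim I (n + k) Z = int k" "dim_over I (n + k) (join n k x y) A = k" by linarith+
qed

lemma generic_projection_correspondence:
  assumes dX: "definable_over I n A X" and gen: "generic I n X x A" and k: "k = dim_over I n x A"
  obtains s Z where "\<forall>t<k. s t < n" "definable_over I (n + k) A Z"
    "Z \<subseteq> graph n k X (\<lambda>u. restr k (u \<circ> s))" "\<forall>v. finite {u \<in> Rn n. join n k u v \<in> Z}"
    "\<forall>u. finite {v \<in> Rn k. join n k u v \<in> Z}"
    "generic I (n + k) Z (join n k x (restr k (x \<circ> s))) A" "dim I (n + k) Z = int k"
    "dim I k (Rn k) = int k"
proof -
  obtain s where s: "\<forall>t<k. s t < n" and alg: "\<forall>i<n. x i \<in> acl I (A \<union> restr k (x \<circ> s) ` {..<k})"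
    using exists_algebraic_coordinates[of I n x A] unfolding k[symmetric] by blast
  define y where "y = restr k (x \<circ> s)"
  have y_sub: "y ` {..<k} \<subseteq> x ` {..<n}" using s by (auto simp: y_def restr_def)
  obtain E where E: "\<forall>i<n. definable_pred I A {..k} (E i) \<and> E i (case_nat (x i) y) \<and>
      (\<forall>d. finite {e. E i (case_nat e d)})"
    using acl_uniformly_finite_preds[OF alg] unfolding y_def by blast
  define Z where "Z = algebraic_graph n k s E X"
  have XR: "X \<subseteq> Rn n" using dX unfolding definable_over_def by blast
  have xX: "x \<in> X" using gen unfolding generic_def by blast
  have dZ: "definable_over I (n + k) A Z"
    unfolding Z_def using definable_over_algebraic_graph[OF dX s] E by blast
  have fib: "\<forall>v. finite {u \<in> Rn n. join n k u v \<in> Z}"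
    unfolding Z_def using finite_fibre_algebraic_graph[OF XR] E by blast
  have "x \<in> {u \<in> X. \<forall>i<n. E i (case_nat (u i) (restr k (u \<circ> s)))}"
    using xX E unfolding y_def by blast
  then have xyZ: "join n k x y \<in> Z"
    unfolding Z_def algebraic_graph_def graph_def y_def by blast
  have dimZ: "dim I (n + k) Z = int k" and "dim_over I (n + k) (join n k x y) A = k"
    using dim_eq_dim_over_join[OF dZ xyZ _ y_sub k[symmetric]] fib by blast+
  then have "generic I (n + k) Z (join n k x y) A" using xyZ unfolding generic_def by simp
  moreover have "dim I k (Rn k) = int k"
    by (rule dim_Rn_eq[OF restr_Rn y_sub[unfolded y_def] alg k[symmetric]])
  moreover have Z_graph: "Z \<subseteq> graph n k X (\<lambda>u. restr k (u \<circ> s))"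
    unfolding Z_def algebraic_graph_def graph_def by blast
  moreover have "\<forall>u. finite {v \<in> Rn k. join n k u v \<in> Z}"
    using finite_fibre_subset_graph[OF Z_graph XR restr_Rn] by blast
  ultimately show ?thesis using that[OF s dZ _ fib _ _ dimZ] unfolding y_def by blast
qed

lemma lman_if_local_projection_homeomorphism:
  assumes tm: "t_minimal I \<tau>" and lo: "lore I \<tau> L"
    and dX: "definable_over I n A X" and dimX: "dim I n X = int k"
    and X': "openin (subtopology (Tn \<tau> n) X) X'" "L n X'" "x \<in> X'"
    and U: "openin (subtopology (Tn \<tau> n) X) U" "x \<in> U"
    and V: "openin (Tn \<tau> k) V" and s: "\<forall>t<k. s t < n"
    and hom: "homeomorphic_map (subtopology (Tn \<tau> n) U) (subtopology (Tn \<tau> k) V) (\<lambda>u. restr k (u \<circ> s))"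
  shows "x \<in> lman I \<tau> L n X"
proof -
  let ?p = "\<lambda>u. restr k (u \<circ> s)"
  obtain W where W: "openin (Tn \<tau> n) W" "U \<inter> X' = W \<inter> X"
    using openin_Int[OF U(1) X'(1)] unfolding openin_subtopology by blast
  obtain B where B: "x \<in> B" "B \<subseteq> W" "openin (Tn \<tau> n) B" "definable I n B"
    using t_minimal_definable_open_nbhd[OF tm W(1)] U(2) X'(3) W(2) by blast
  define U' where "U' = X \<inter> B"
  have U'_sub: "U' \<subseteq> U \<inter> X'" using W(2) B(2) unfolding U'_def by blast
  have dU': "definable I n U'"
    using definable_over_Int[OF definable_over_mono[OF dX] B(4)[unfolded definable_def]]
    unfolding U'_def definable_def by simp
  have "U' = X' \<inter> B" using U'_sub openin_subset[OF X'(1)] unfolding U'_def by auto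
  then have LU': "L n U'"
    using lore_openin[OF lo X'(2) dU'] openin_subtopology_Int2[OF B(3)] by metis
  have "U' = U \<inter> B" using U'_sub openin_subset[OF U(1)] unfolding U'_def by auto
  then have "openin (subtopology (Tn \<tau> n) U) U'" using openin_subtopology_Int2[OF B(3)] by metis
  note hom' = homeomorphic_map_restrict_openin[OF hom this]
  have "loric_homeomorphism \<tau> L n k U' (?p ` U') ?p"
    unfolding loric_homeomorphism_def loric_map_def
    using hom'(1) homeomorphic_imp_continuous_map lore_graph_coordinate_projection[OF lo LU' s] by blast
  moreover have "openin (Tn \<tau> k) (?p ` U')" by (rule openin_trans_full[OF hom'(2) V])
  moreover have "openin (subtopology (Tn \<tau> n) X) U'"
    unfolding U'_def by (rule openin_subtopology_Int2[OF B(3)])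
  ultimately show ?thesis
    unfolding lman_def using dimX dU' X'(3) B(1) U'_def openin_subset[OF X'(1)] by auto
qed

lemma loric_open_part_at_generic:
  assumes "lore I \<tau> L" "definable_over I n A X" "generic I n X x A"
  obtains X' where "openin (subtopology (Tn \<tau> n) X) X'" "L n X'" "x \<in> X'"
proof -
  have "x \<in> X" using assms(3) unfolding generic_def by blast
  then obtain X' where X': "openin (subtopology (Tn \<tau> n) X) X'" "definable_over I n A X'" "L n X'"
      "dim I n (X - X') < dim I n X"
    using lore_open_part[OF assms(1,2)] by blast
  then show ?thesis using that generic_mem_if_dim_Diff_less[OF assms(2) X'(2,4) assms(3)] by blast
qed

lemma generic_projection_local_homeomorphism:
  assumes tm: "t_minimal I \<tau>" and dX: "definable_over I n A X" and gen: "generic I n X x A"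
    and k: "k = dim_over I n x A"
  obtains s U V where "\<forall>t<k. s t < n" "openin (subtopology (Tn \<tau> n) X) U" "x \<in> U"
    "openin (Tn \<tau> k) V"
    "homeomorphic_map (subtopology (Tn \<tau> n) U) (subtopology (Tn \<tau> k) V) (\<lambda>u. restr k (u \<circ> s))"
proof -
  have XR: "X \<subseteq> Rn n" using dX unfolding definable_over_def by blast
  have "x \<in> Rn n" and dimX: "dim I n X = int k" using gen XR unfolding generic_def k by auto
  have hg: "hausdorff_geometric I \<tau>" using tm unfolding t_minimal_def by (elim conjE)
  then have top: "topspace \<tau> = UNIV" unfolding hausdorff_geometric_def by (elim conjE)
  obtain s Z where s: "\<forall>t<k. s t < n" and dZ: "definable_over I (n + k) A Z"
    and Z_graph: "Z \<subseteq> graph n k X (\<lambda>u. restr k (u \<circ> s))"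
    and fibres: "\<forall>v. finite {u \<in> Rn n. join n k u v \<in> Z}" "\<forall>u. finite {v \<in> Rn k. join n k u v \<in> Z}"
    and gen_Z: "generic I (n + k) Z (join n k x (restr k (x \<circ> s))) A"
    and "dim I (n + k) Z = int k" "dim I k (Rn k) = int k"
    using generic_projection_correspondence[OF dX gen k] by blast
  then have dims: "dim I n X = dim I k (Rn k)" "dim I (n + k) Z = dim I n X" using dimX by simp_all
  have "Z \<subseteq> tprod n k X (Rn k)"
    using Z_graph graph_subset_tprod[of "\<lambda>u. restr k (u \<circ> s)", OF restr_Rn] by blast
  then obtain U V f where U: "openin (subtopology (Tn \<tau> n) X) U" "x \<in> U"
    and V: "openin (subtopology (Tn \<tau> k) (Rn k)) V" "restr k (x \<circ> s) \<in> V"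
    and hom: "homeomorphic_map (subtopology (Tn \<tau> n) U) (subtopology (Tn \<tau> k) V) f"
    and graph_f: "Z \<inter> tprod n k U V = graph n k U f"
    using hausdorff_geometric_local_homeomorphism[OF hg dX definable_over_Rn dZ _ dims fibres(2,1)
        \<open>x \<in> Rn n\<close> restr_Rn gen_Z] by blast
  have "openin (Tn \<tau> k) V" using V(1) by (simp add: Tn_topspace[OF top, symmetric])
  moreover have "homeomorphic_map (subtopology (Tn \<tau> n) U) (subtopology (Tn \<tau> k) V) (\<lambda>u. restr k (u \<circ> s))"
    by (rule homeomorphic_map_eq_projection[OF top XR U(1) hom]) (use graph_f Z_graph in blast)
  ultimately show ?thesis using that s U by blast
qed

theorem lemma2p17:
  fixes I :: "'r \<Rightarrow> 'a list \<Rightarrow> bool" and \<tau> :: "'a topology"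
    and L :: "nat \<Rightarrow> (nat \<Rightarrow> 'a) set \<Rightarrow> bool"
    and n :: nat and A :: "'a set" and X :: "(nat \<Rightarrow> 'a) set" and x :: "nat \<Rightarrow> 'a"
  assumes "t_minimal I \<tau>"
    and "lore I \<tau> L"
    and "definable_over I n A X"
    and "generic I n X x A"
  shows "x \<in> lman I \<tau> L n X"
proof -
  define k where "k = dim_over I n x A"
  have dimX: "dim I n X = int k" using assms(4) unfolding generic_def k_def by simp
  obtain X' where X': "openin (subtopology (Tn \<tau> n) X) X'" "L n X'" "x \<in> X'"
    using loric_open_part_at_generic[OF assms(2-4)] .
  obtain s U V where s: "\<forall>t<k. s t < n" and U: "openin (subtopology (Tn \<tau> n) X) U" "x \<in> U"
    and V: "openin (Tn \<tau> k) V"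
    and hom: "homeomorphic_map (subtopology (Tn \<tau> n) U) (subtopology (Tn \<tau> k) V) (\<lambda>u. restr k (u \<circ> s))"
    using generic_projection_local_homeomorphism[OF assms(1,3,4) k_def] .
  show ?thesis by (rule lman_if_local_projection_homeomorphism[OF assms(1-3) dimX X' U V s hom])
qed

end
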